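(* Fix $C>2\pi$. For $y,z>0$ and $\varepsilon\in(0,1)$ let $\{X_r\}_{0\le r\le1}$ be a Bessel-3 bridge from $\varepsilon^{3/4}z$ to $\varepsilon^{3/4}y$ over time $1$, and let $\tau=\inf\{r\ge0: X_r\ge2C\varepsilon^{1/4}\}$ (with $\inf\emptyset=\infty$). There exists a positive constant $C_9$ such that for all $\varepsilon$ sufficiently small and all $y,z\in(0,\infty)$, \[ P\Big(\Big\{\tau\le\tfrac12\Big\}\cap\Big\{\min_{0\le r\le\varepsilon}X_{\tau+r}\le\tfrac{3C\varepsilon^{1/4}}{2}\Big\}\Big)\le\Big(\frac1{yz}+2\Big)e^{-C_9/\sqrt\varepsilon}. \]
   Context: A Bessel-3 bridge from $a$ to $b$ over time $u$ is a Bessel-3 process (radial part of three-dimensional Brownian motion) started at $a$ and conditioned to be at $b$ at time $u$; for $a,b>0$ it has the same law as a Brownian bridge from $a$ to $b$ over time $u$ conditioned to avoid $0$. *)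

theory Defs
  imports "HOL-Probability.Probability"
begin

definition bes3_density :: "real \<Rightarrow> real \<Rightarrow> real \<Rightarrow> real" where
  "bes3_density t x y =
     (if 0 < x \<and> 0 < y then
        (y / x) * (1 / sqrt (2 * pi * t)) *
        (exp (- ((y - x)^2) / (2 * t)) - exp (- ((y + x)^2) / (2 * t)))
      else 0)"

text \<open>Joint density of (X (ts 0), ..., X (ts (n-1))) for a Bessel-3 bridge from a to b
  over time 1, where 0 < ts 0 < ... < ts (n-1) < 1.\<close>
definition bes3_bridge_fdd ::
    "real \<Rightarrow> real \<Rightarrow> nat \<Rightarrow> (nat \<Rightarrow> real) \<Rightarrow> (nat \<Rightarrow> real) \<Rightarrow> real" where
  "bes3_bridge_fdd a b n ts x =
     (\<Prod>i<n. bes3_density (ts i - (if i = 0 then 0 else ts (i - 1)))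
                           (if i = 0 then a else x (i - 1)) (x i))
     * bes3_density (1 - ts (n - 1)) (x (n - 1)) b / bes3_density 1 a b"

definition bes3_bridge :: "'a measure \<Rightarrow> (real \<Rightarrow> 'a \<Rightarrow> real) \<Rightarrow> real \<Rightarrow> real \<Rightarrow> bool" where
  "bes3_bridge M X a b \<longleftrightarrow>
     prob_space M \<and>
     (\<forall>t\<in>{0..1}. X t \<in> borel_measurable M) \<and>
     (\<forall>\<omega>\<in>space M. continuous_on {0..1} (\<lambda>t. X t \<omega>)) \<and>
     (\<forall>n ts. 0 < n \<longrightarrow> 0 < ts 0 \<longrightarrow> ts (n - 1) < 1 \<longrightarrow>
        (\<forall>i. Suc i < n \<longrightarrow> ts i < ts (Suc i)) \<longrightarrow>
        distr M (PiM {..<n} (\<lambda>_. borel)) (\<lambda>\<omega>. \<lambda>i\<in>{..<n}. X (ts i) \<omega>) =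
        density (PiM {..<n} (\<lambda>_. lborel)) (\<lambda>x. ennreal (bes3_bridge_fdd a b n ts x)))"

definition hit_time :: "(real \<Rightarrow> 'a \<Rightarrow> real) \<Rightarrow> real \<Rightarrow> 'a \<Rightarrow> ereal" where
  "hit_time X L \<omega> = Inf (ereal ` {r \<in> {0..1}. L \<le> X r \<omega>})"

end

theory Submission
  imports Defs "HOL-Real_Asymp.Real_Asymp"
begin

text \<open>The density of the Bessel-3 bridge from a to b is at most 1 / (1 - exp (- 2 a b)) times that
  of the Brownian bridge, so the Gaussian tails of the Brownian bridge control the increments of
  the deviation of the path from the line a + t (b - a). A dyadic chaining argument turns bounds on
  the dyadic increments into a modulus of continuity: outside an event of probability of order
  exp (- K^2 / \<epsilon>) / \<epsilon>, the deviation moves by at most K/5 over any time window of length \<epsilon>.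
  On that event a path reaching 2K before time 1/2 stays above 8K/5 for a further time \<epsilon>, unless
  the drift b - a is so negative that a itself is large, in which case the path stays above
  a/4 > 8K/5 on [0, 5/8]. The scaling K = C \<epsilon>^(1/4), a, b of order \<epsilon>^(3/4) turns
  exp (- K^2 / \<epsilon>) into exp (- C9 / sqrt \<epsilon>).\<close>

section \<open>Gaussian estimates\<close>

abbreviation heat_kernel :: "real \<Rightarrow> real \<Rightarrow> real" where
  "heat_kernel t u \<equiv> normal_density 0 (sqrt t) u"

lemma normal_density_diff: "normal_density \<mu> \<sigma> (x - a) = normal_density (\<mu> + a) \<sigma> x"
  unfolding normal_density_def by (simp add: algebra_simps)

text \<open>Chapman--Kolmogorov with the midpoint disintegrated: the Gaussian bridge at an
  intermediate time is again Gaussian.\<close>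
lemma heat_kernel_mult_heat_kernel:
  fixes s r v e :: real
  assumes s: "0 < s" and r: "0 < r"
  shows "heat_kernel s v * heat_kernel r (e - v) =
         heat_kernel (s + r) e * normal_density (s * e / (s + r)) (sqrt (s * r / (s + r))) v"
proof -
  define q where "q = s + r"
  have q: "0 < q" using s r by (simp add: q_def)
  have "- v\<^sup>2 / (2 * s) + - (e - v)\<^sup>2 / (2 * r) =
      - (r * q * v\<^sup>2 + s * q * (e - v)\<^sup>2) / (2 * s * r * q)"
    using s r q by (simp add: field_simps)
  also have "r * q * v\<^sup>2 + s * q * (e - v)\<^sup>2 = s * r * e\<^sup>2 + (q * v - s * e)\<^sup>2"
    unfolding q_def by algebra
  also have "- (s * r * e\<^sup>2 + (q * v - s * e)\<^sup>2) / (2 * s * r * q) =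
      - e\<^sup>2 / (2 * q) + - (v - s * e / q)\<^sup>2 / (2 * (s * r / q))"
    using s r q by (simp add: field_simps power2_eq_square)
  finally have exponent: "- v\<^sup>2 / (2 * s) + - (e - v)\<^sup>2 / (2 * r) =
      - e\<^sup>2 / (2 * q) + - (v - s * e / q)\<^sup>2 / (2 * (s * r / q))" .
  have factor: "1 / sqrt (2 * pi * s) * (1 / sqrt (2 * pi * r)) =
      1 / sqrt (2 * pi * q) * (1 / sqrt (2 * pi * (s * r / q)))"
    using s r q by (simp add: real_sqrt_mult[symmetric] field_simps)
  have "heat_kernel s v * heat_kernel r (e - v) =
      (1 / sqrt (2 * pi * s) * (1 / sqrt (2 * pi * r))) *
      exp (- v\<^sup>2 / (2 * s) + - (e - v)\<^sup>2 / (2 * r))"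
    using s r unfolding normal_density_def by (simp add: mult_exp_exp)
  also have "\<dots> = (1 / sqrt (2 * pi * q) * (1 / sqrt (2 * pi * (s * r / q)))) *
      exp (- e\<^sup>2 / (2 * q) + - (v - s * e / q)\<^sup>2 / (2 * (s * r / q)))"
    by (simp only: exponent factor)
  also have "\<dots> = heat_kernel q e * normal_density (s * e / q) (sqrt (s * r / q)) v"
    using s r q unfolding normal_density_def by (simp add: mult_exp_exp)
  finally show ?thesis unfolding q_def .
qed

lemma normal_density_mult_exp:
  assumes "0 < \<sigma>"
  shows "normal_density \<mu> \<sigma> u * exp (l * (u - \<mu>)) =
         exp (l\<^sup>2 * \<sigma>\<^sup>2 / 2) * normal_density (\<mu> + l * \<sigma>\<^sup>2) \<sigma> u"
proof -
  have "- (u - \<mu>)\<^sup>2 / (2 * \<sigma>\<^sup>2) + l * (u - \<mu>) =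
      l\<^sup>2 * \<sigma>\<^sup>2 / 2 + - (u - (\<mu> + l * \<sigma>\<^sup>2))\<^sup>2 / (2 * \<sigma>\<^sup>2)"
    using assms by (simp add: field_simps power2_eq_square)
  then show ?thesis
    unfolding normal_density_def by (simp add: exp_add[symmetric] mult_ac)
qed

lemma nn_integral_normal_density:
  "0 < \<sigma> \<Longrightarrow> (\<integral>\<^sup>+x. ennreal (normal_density \<mu> \<sigma> x) \<partial>lborel) = 1"
  by (subst nn_integral_eq_integral) auto

lemma indicator_abs_gt_le_exp:
  fixes u \<delta> l :: real
  assumes "0 \<le> l"
  shows "indicator {u. \<delta> < \<bar>u\<bar>} u \<le> exp (- l * \<delta>) * exp (l * u) + exp (- l * \<delta>) * exp ((- l) * u)"
proof (cases "\<delta> < \<bar>u\<bar>")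
  case True
  then have "l * \<delta> \<le> l * \<bar>u\<bar>"
    using assms by (intro mult_left_mono) auto
  then have "l * \<delta> \<le> l * u \<or> l * \<delta> \<le> - l * u"
    by (cases "0 \<le> u") auto
  then have "1 \<le> exp (- l * \<delta>) * exp (l * u) \<or> 1 \<le> exp (- l * \<delta>) * exp ((- l) * u)"
    by (auto simp: mult_exp_exp)
  then show ?thesis
    using True by (auto simp: add_increasing add_increasing2)
qed (simp add: add_nonneg_nonneg)

lemma nn_integral_normal_density_tail:
  fixes \<mu> \<sigma> \<delta> :: real
  assumes \<sigma>: "0 < \<sigma>" and \<delta>: "0 \<le> \<delta>"
  shows "(\<integral>\<^sup>+u. ennreal (normal_density \<mu> \<sigma> u) * indicator {u. \<delta> < \<bar>u - \<mu>\<bar>} u \<partial>lborel)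
          \<le> ennreal (2 * exp (- \<delta>\<^sup>2 / (2 * \<sigma>\<^sup>2)))"
proof -
  \<comment> \<open>Chernoff bound with the optimal exponent\<close>
  define l where "l = \<delta> / \<sigma>\<^sup>2"
  have l: "0 \<le> l" using \<delta> \<sigma> by (simp add: l_def)
  define c where "c = exp (- l * \<delta>) * exp (l\<^sup>2 * \<sigma>\<^sup>2 / 2)"
  have c: "c = exp (- \<delta>\<^sup>2 / (2 * \<sigma>\<^sup>2))"
    unfolding c_def l_def using \<sigma> by (simp add: mult_exp_exp field_simps power2_eq_square)
  have pointwise: "ennreal (normal_density \<mu> \<sigma> u) * indicator {u. \<delta> < \<bar>u - \<mu>\<bar>} u \<le>
      ennreal (c * normal_density (\<mu> + l * \<sigma>\<^sup>2) \<sigma> u) +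
      ennreal (c * normal_density (\<mu> + (- l) * \<sigma>\<^sup>2) \<sigma> u)" for u
  proof -
    have "normal_density \<mu> \<sigma> u * indicator {u. \<delta> < \<bar>u\<bar>} (u - \<mu>) \<le>
        normal_density \<mu> \<sigma> u * (exp (- l * \<delta>) * exp (l * (u - \<mu>)) +
          exp (- l * \<delta>) * exp ((- l) * (u - \<mu>)))"
      using indicator_abs_gt_le_exp[OF l] by (intro mult_left_mono) auto
    also have "\<dots> = c * normal_density (\<mu> + l * \<sigma>\<^sup>2) \<sigma> u +
        c * normal_density (\<mu> + (- l) * \<sigma>\<^sup>2) \<sigma> u"
      using normal_density_mult_exp[OF \<sigma>, of \<mu> u l] normal_density_mult_exp[OF \<sigma>, of \<mu> u "- l"]
      by (simp add: c_def algebra_simps) (metis mult.left_commute)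
    finally show ?thesis
      by (auto simp: ennreal_plus[symmetric] c_def indicator_def simp del: ennreal_plus
               intro!: ennreal_leI)
  qed
  have "(\<integral>\<^sup>+u. ennreal (normal_density \<mu> \<sigma> u) * indicator {u. \<delta> < \<bar>u - \<mu>\<bar>} u \<partial>lborel)
      \<le> (\<integral>\<^sup>+u. ennreal (c * normal_density (\<mu> + l * \<sigma>\<^sup>2) \<sigma> u) +
               ennreal (c * normal_density (\<mu> + (- l) * \<sigma>\<^sup>2) \<sigma> u) \<partial>lborel)"
    by (intro nn_integral_mono pointwise)
  also have "\<dots> = ennreal c * (\<integral>\<^sup>+u. ennreal (normal_density (\<mu> + l * \<sigma>\<^sup>2) \<sigma> u) \<partial>lborel)
       + ennreal c * (\<integral>\<^sup>+u. ennreal (normal_density (\<mu> + (- l) * \<sigma>\<^sup>2) \<sigma> u) \<partial>lborel)"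
    by (subst nn_integral_add) (auto simp: ennreal_mult c_def nn_integral_cmult)
  also have "\<dots> = ennreal (2 * c)"
    using \<sigma> by (simp add: nn_integral_normal_density c_def flip: ennreal_plus)
  finally show ?thesis unfolding c .
qed

lemma nn_integral_brownian_bridge_tail:
  fixes a b t r \<delta> :: real
  assumes t: "0 < t" and r: "0 < r" and tr: "t + r = 1" and \<delta>: "0 \<le> \<delta>"
  shows "(\<integral>\<^sup>+x. ennreal (heat_kernel t (x - a) * heat_kernel r (b - x) / heat_kernel 1 (b - a))
            * indicator {x. \<delta> < \<bar>x - a - t * (b - a)\<bar>} x \<partial>lborel)
     \<le> ennreal (2 * exp (- \<delta>\<^sup>2 / (2 * (t * r))))"
proof -
  define \<mu> where "\<mu> = a + t * (b - a)"
  have "heat_kernel t (x - a) * heat_kernel r (b - x) / heat_kernel 1 (b - a) =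
      normal_density \<mu> (sqrt (t * r)) x" for x
  proof -
    have "heat_kernel t (x - a) * heat_kernel r ((b - a) - (x - a)) =
        heat_kernel 1 (b - a) * normal_density (t * (b - a)) (sqrt (t * r)) (x - a)"
      using heat_kernel_mult_heat_kernel[OF t r, of "x - a" "b - a"] tr by simp
    moreover have "heat_kernel 1 (b - a) > 0" by (simp add: normal_density_pos)
    ultimately show ?thesis by (simp add: normal_density_diff \<mu>_def field_simps)
  qed
  moreover have "{x. \<delta> < \<bar>x - a - t * (b - a)\<bar>} = {x. \<delta> < \<bar>x - \<mu>\<bar>}"
    by (simp add: \<mu>_def algebra_simps)
  ultimately have "(\<integral>\<^sup>+x. ennreal (heat_kernel t (x - a) * heat_kernel r (b - x) / heat_kernel 1 (b - a))
            * indicator {x. \<delta> < \<bar>x - a - t * (b - a)\<bar>} x \<partial>lborel) =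
      (\<integral>\<^sup>+x. ennreal (normal_density \<mu> (sqrt (t * r)) x) * indicator {x. \<delta> < \<bar>x - \<mu>\<bar>} x \<partial>lborel)"
    by simp
  also have "\<dots> \<le> ennreal (2 * exp (- \<delta>\<^sup>2 / (2 * (sqrt (t * r))\<^sup>2)))"
    using t r \<delta> by (intro nn_integral_normal_density_tail) auto
  finally show ?thesis using t r by simp
qed

lemma nn_integral_brownian_bridge_increment_tail:
  fixes a b s h r \<delta> :: real
  assumes s: "0 < s" and h: "0 < h" and r: "0 < r" and shr: "s + h + r = 1" and \<delta>: "0 \<le> \<delta>"
  shows "(\<integral>\<^sup>+x0. \<integral>\<^sup>+x1. ennreal (heat_kernel s (x0 - a) * heat_kernel h (x1 - x0) * heat_kernel r (b - x1)
              / heat_kernel 1 (b - a))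
            * indicator {p. \<delta> < \<bar>snd p - fst p - h * (b - a)\<bar>} (x0, x1) \<partial>lborel \<partial>lborel)
     \<le> ennreal (2 * exp (- \<delta>\<^sup>2 / (2 * (h * (s + r)))))"
proof -
  define c where "c = b - a"
  define q where "q = s + r"
  have q: "0 < q" using s r by (simp add: q_def)
  have hq: "h + q = 1" using shr by (simp add: q_def)
  \<comment> \<open>after substituting x1 = x0 + u, the density factors into a Gaussian in the
    increment u and a Gaussian in x0 given u\<close>
  define F where "F x0 u = ennreal (normal_density (h * c) (sqrt (h * q)) u) * indicator {u. \<delta> < \<bar>u - h * c\<bar>} u
       * ennreal (normal_density (s * (c - u) / q + a) (sqrt (s * r / q)) x0)" for x0 u
  have F: "ennreal (heat_kernel s (x0 - a) * heat_kernel h ((x0 + u) - x0) * heat_kernel r (b - (x0 + u))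
              / heat_kernel 1 (b - a))
            * indicator {p. \<delta> < \<bar>snd p - fst p - h * (b - a)\<bar>} (x0, x0 + u) = F x0 u" for x0 u
  proof -
    have e1: "heat_kernel s (x0 - a) * heat_kernel r ((c - u) - (x0 - a)) =
        heat_kernel q (c - u) * normal_density (s * (c - u) / q) (sqrt (s * r / q)) (x0 - a)"
      using heat_kernel_mult_heat_kernel[OF s r, of "x0 - a" "c - u"] by (simp add: q_def)
    have e2: "heat_kernel h u * heat_kernel q (c - u) =
        heat_kernel 1 c * normal_density (h * c) (sqrt (h * q)) u"
      using heat_kernel_mult_heat_kernel[OF h q, of u c] hq by simp
    have "heat_kernel s (x0 - a) * heat_kernel h ((x0 + u) - x0) * heat_kernel r (b - (x0 + u))
          / heat_kernel 1 (b - a)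
       = (heat_kernel h u * heat_kernel q (c - u)) *
         normal_density (s * (c - u) / q) (sqrt (s * r / q)) (x0 - a) / heat_kernel 1 c"
      using e1 by (simp add: c_def algebra_simps)
    also have "\<dots> = normal_density (h * c) (sqrt (h * q)) u *
        normal_density (s * (c - u) / q + a) (sqrt (s * r / q)) x0"
      unfolding e2 using normal_density_pos[of 1 0 c] by (simp add: normal_density_diff)
    finally show ?thesis unfolding F_def
      by (simp add: c_def ennreal_mult mult_ac split: split_indicator)
  qed
  have "(\<integral>\<^sup>+x0. \<integral>\<^sup>+x1. ennreal (heat_kernel s (x0 - a) * heat_kernel h (x1 - x0) * heat_kernel r (b - x1)
              / heat_kernel 1 (b - a))
            * indicator {p. \<delta> < \<bar>snd p - fst p - h * (b - a)\<bar>} (x0, x1) \<partial>lborel \<partial>lborel)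
     = (\<integral>\<^sup>+x0. \<integral>\<^sup>+u. F x0 u \<partial>lborel \<partial>lborel)"
  proof (rule nn_integral_cong)
    fix x0 :: real
    have "(\<integral>\<^sup>+x1. ennreal (heat_kernel s (x0 - a) * heat_kernel h (x1 - x0) * heat_kernel r (b - x1)
              / heat_kernel 1 (b - a))
            * indicator {p. \<delta> < \<bar>snd p - fst p - h * (b - a)\<bar>} (x0, x1) \<partial>lborel) =
        ennreal \<bar>1::real\<bar> * (\<integral>\<^sup>+u. ennreal (heat_kernel s (x0 - a) * heat_kernel h ((x0 + 1 * u) - x0)
              * heat_kernel r (b - (x0 + 1 * u)) / heat_kernel 1 (b - a))
            * indicator {p. \<delta> < \<bar>snd p - fst p - h * (b - a)\<bar>} (x0, x0 + 1 * u) \<partial>lborel)"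
      by (rule nn_integral_real_affine) auto
    then show "(\<integral>\<^sup>+x1. ennreal (heat_kernel s (x0 - a) * heat_kernel h (x1 - x0) * heat_kernel r (b - x1)
              / heat_kernel 1 (b - a))
            * indicator {p. \<delta> < \<bar>snd p - fst p - h * (b - a)\<bar>} (x0, x1) \<partial>lborel) =
        (\<integral>\<^sup>+u. F x0 u \<partial>lborel)"
      by (simp only: mult_1 abs_one F ennreal_1 mult_1_left)
  qed
  also have "\<dots> = (\<integral>\<^sup>+u. \<integral>\<^sup>+x0. F x0 u \<partial>lborel \<partial>lborel)"
    by (rule lborel_pair.Fubini'[symmetric]) (unfold F_def normal_density_def, measurable)
  also have "\<dots> = (\<integral>\<^sup>+u. ennreal (normal_density (h * c) (sqrt (h * q)) u)
      * indicator {u. \<delta> < \<bar>u - h * c\<bar>} u \<partial>lborel)"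
    unfolding F_def using s r q
    by (intro nn_integral_cong, subst nn_integral_cmult) (auto simp: nn_integral_normal_density)
  also have "\<dots> \<le> ennreal (2 * exp (- \<delta>\<^sup>2 / (2 * (sqrt (h * q))\<^sup>2)))"
    using h q \<delta> by (intro nn_integral_normal_density_tail) auto
  finally show ?thesis using h q by (simp add: q_def)
qed

section \<open>Comparison of the Bessel-3 bridge with the Brownian bridge\<close>

lemma bes3_density_nonneg:
  assumes "0 < t"
  shows "0 \<le> bes3_density t x y"
proof (cases "0 < x \<and> 0 < y")
  case True
  then have "(y - x)\<^sup>2 \<le> (y + x)\<^sup>2" by (simp add: power2_eq_square algebra_simps)
  then have "exp (- ((y + x)\<^sup>2) / (2 * t)) \<le> exp (- ((y - x)\<^sup>2) / (2 * t))"
    using assms by (simp add: divide_right_mono)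
  then show ?thesis using True assms unfolding bes3_density_def by simp
qed (auto simp: bes3_density_def)

lemma bes3_density_le_heat_kernel:
  assumes "0 < t" "0 < x" "0 < y"
  shows "bes3_density t x y \<le> y / x * heat_kernel t (y - x)"
proof -
  have "y / x * (1 / sqrt (2 * pi * t)) * (exp (- ((y - x)\<^sup>2) / (2 * t)) - exp (- ((y + x)\<^sup>2) / (2 * t)))
     \<le> y / x * (1 / sqrt (2 * pi * t)) * exp (- ((y - x)\<^sup>2) / (2 * t))"
    using assms by (intro mult_left_mono) auto
  then show ?thesis using assms unfolding bes3_density_def normal_density_def by simp
qed

lemma bes3_density_eq_0: "x \<le> 0 \<or> y \<le> 0 \<Longrightarrow> bes3_density t x y = 0"
  by (auto simp: bes3_density_def)

lemma bes3_density_one: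
  assumes "0 < a" "0 < b"
  shows "bes3_density 1 a b = b / a * heat_kernel 1 (b - a) * (1 - exp (- 2 * a * b))"
proof -
  have "- ((b + a)\<^sup>2) / 2 = - ((b - a)\<^sup>2) / 2 + (- 2 * a * b)"
    by (simp add: power2_eq_square field_simps)
  then have "exp (- ((b + a)\<^sup>2) / 2) = exp (- ((b - a)\<^sup>2) / 2) * exp (- 2 * a * b)"
    by (simp add: mult_exp_exp)
  then have "bes3_density 1 a b =
      b / a * (1 / sqrt (2 * pi)) * (exp (- ((b - a)\<^sup>2) / 2) * (1 - exp (- 2 * a * b)))"
    using assms unfolding bes3_density_def by (simp add: algebra_simps)
  then show ?thesis by (simp add: normal_density_def)
qed

text \<open>The normalisation of the Bessel-3 bridge is that of the Brownian bridge times
  1 - exp (- 2 a b), the probability that the Brownian bridge from a to b avoids 0.\<close>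
lemma divide_bes3_density_one_le:
  assumes a: "0 < a" and b: "0 < b" and p: "p \<le> b / a * q"
  shows "p / bes3_density 1 a b \<le> 1 / (1 - exp (- 2 * a * b)) * (q / heat_kernel 1 (b - a))"
proof -
  have E: "0 < 1 - exp (- 2 * a * b)" using a b by simp
  have N: "0 < heat_kernel 1 (b - a)" by (simp add: normal_density_pos)
  have "p / bes3_density 1 a b \<le> b / a * q / bes3_density 1 a b"
    using a b E N p by (intro divide_right_mono) (auto simp: bes3_density_one)
  also have "\<dots> = 1 / (1 - exp (- 2 * a * b)) * (q / heat_kernel 1 (b - a))"
    using a b E N by (simp add: bes3_density_one field_simps)
  finally show ?thesis .
qed

lemma bes3_density_mult_le:
  assumes "0 < t" "0 < r" "0 < a" "0 < b"
  shows "bes3_density t a x * bes3_density r x b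
    \<le> b / a * (heat_kernel t (x - a) * heat_kernel r (b - x))"
proof (cases "0 < x")
  case True
  have "bes3_density t a x * bes3_density r x b
      \<le> (x / a * heat_kernel t (x - a)) * (b / x * heat_kernel r (b - x))"
    using assms True
    by (intro mult_mono bes3_density_le_heat_kernel bes3_density_nonneg) auto
  also have "\<dots> = b / a * (heat_kernel t (x - a) * heat_kernel r (b - x))"
    using True by (simp add: field_simps)
  finally show ?thesis .
qed (use assms in \<open>simp add: bes3_density_eq_0\<close>)

lemma bes3_density_mult3_le:
  assumes "0 < s" "0 < h" "0 < r" "0 < a" "0 < b"
  shows "bes3_density s a x0 * bes3_density h x0 x1 * bes3_density r x1 b
    \<le> b / a * (heat_kernel s (x0 - a) * heat_kernel h (x1 - x0) * heat_kernel r (b - x1))"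
proof (cases "0 < x0")
  case True
  have "bes3_density s a x0 * (bes3_density h x0 x1 * bes3_density r x1 b)
      \<le> (x0 / a * heat_kernel s (x0 - a)) * (b / x0 * (heat_kernel h (x1 - x0) * heat_kernel r (b - x1)))"
    using assms True
    by (intro mult_mono bes3_density_le_heat_kernel bes3_density_mult_le bes3_density_nonneg
        mult_nonneg_nonneg) auto
  also have "\<dots> = b / a * (heat_kernel s (x0 - a) * heat_kernel h (x1 - x0) * heat_kernel r (b - x1))"
    using True by (simp add: field_simps)
  finally show ?thesis by (simp add: mult.assoc)
qed (use assms in \<open>simp add: bes3_density_eq_0\<close>)

lemma bes3_density_measurable[measurable (raw)]:
  assumes "f \<in> borel_measurable M" "g \<in> borel_measurable M"
  shows "(\<lambda>\<omega>. bes3_density t (f \<omega>) (g \<omega>)) \<in> borel_measurable M"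
  using assms unfolding bes3_density_def by measurable

lemma bes3_bridge_fdd_measurable:
  "0 < n \<Longrightarrow> (\<lambda>x. ennreal (bes3_bridge_fdd a b n ts x)) \<in> borel_measurable (PiM {..<n} (\<lambda>_. lborel))"
  unfolding bes3_bridge_fdd_def
  by (intro measurable_compose[OF _ measurable_ennreal] borel_measurable_divide
      borel_measurable_times borel_measurable_prod bes3_density_measurable)
    (auto intro!: measurable_component_singleton)

lemma bes3_bridge_emeasure_fdd:
  assumes br: "bes3_bridge M X a b" and n: "0 < n" and ts: "0 < ts 0" "ts (n - 1) < 1"
    "\<forall>i. Suc i < n \<longrightarrow> ts i < ts (Suc i)"
    and S: "S \<in> sets (PiM {..<n} (\<lambda>_. borel))"
  shows "emeasure M {\<omega> \<in> space M. (\<lambda>i\<in>{..<n}. X (ts i) \<omega>) \<in> S} =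
    (\<integral>\<^sup>+x. ennreal (bes3_bridge_fdd a b n ts x) * indicator S x \<partial>PiM {..<n} (\<lambda>_. lborel))"
proof -
  have ts_range: "ts i \<in> {0..1}" if "i < n" for i
  proof -
    have "ts 0 \<le> ts i"
      using that by (induction i) (use ts(3) in \<open>auto intro: order.trans less_imp_le\<close>)
    moreover have "i \<le> n - 1" using that by simp
    then have "ts i \<le> ts (n - 1)"
    proof (induction rule: inc_induct)
      case (step j)
      then show ?case using ts(3) by (metis Suc_diff_1 Suc_less_eq n order.trans less_imp_le)
    qed simp
    ultimately show ?thesis using ts(1,2) by auto
  qed
  have X: "(\<lambda>\<omega>. \<lambda>i\<in>{..<n}. X (ts i) \<omega>) \<in> measurable M (PiM {..<n} (\<lambda>_. borel))"
    using br ts_range unfolding bes3_bridge_def by (intro measurable_restrict) auto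
  have "{\<omega> \<in> space M. (\<lambda>i\<in>{..<n}. X (ts i) \<omega>) \<in> S} = (\<lambda>\<omega>. \<lambda>i\<in>{..<n}. X (ts i) \<omega>) -` S \<inter> space M"
    by auto
  also have "emeasure M \<dots> = emeasure (distr M (PiM {..<n} (\<lambda>_. borel)) (\<lambda>\<omega>. \<lambda>i\<in>{..<n}. X (ts i) \<omega>)) S"
    using X S by (rule emeasure_distr[symmetric])
  also have "\<dots> = emeasure (density (PiM {..<n} (\<lambda>_. lborel)) (\<lambda>x. ennreal (bes3_bridge_fdd a b n ts x))) S"
    using br n ts unfolding bes3_bridge_def by simp
  also have "\<dots> = (\<integral>\<^sup>+x. ennreal (bes3_bridge_fdd a b n ts x) * indicator S x \<partial>PiM {..<n} (\<lambda>_. lborel))"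
    using S n by (intro emeasure_density bes3_bridge_fdd_measurable) (simp_all cong: sets_PiM_cong)
  finally show ?thesis .
qed

lemma nn_integral_PiM_lessThan_1:
  fixes f :: "real \<Rightarrow> ennreal"
  assumes f: "f \<in> borel_measurable borel"
  shows "(\<integral>\<^sup>+x. f (x 0) \<partial>PiM {..<1::nat} (\<lambda>_. lborel)) = (\<integral>\<^sup>+x0. f x0 \<partial>lborel)"
proof -
  interpret product_sigma_finite "\<lambda>_::nat. lborel"
    by (simp add: product_sigma_finite_def lborel.sigma_finite_measure_axioms)
  have "{..<1::nat} = {0}" by auto
  then show ?thesis using f by (simp add: product_nn_integral_singleton)
qed

lemma nn_integral_PiM_lessThan_2:
  fixes f :: "real \<Rightarrow> real \<Rightarrow> ennreal"
  assumes f: "case_prod f \<in> borel_measurable (borel \<Otimes>\<^sub>M borel)"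
  shows "(\<integral>\<^sup>+x. f (x 0) (x 1) \<partial>PiM {..<2::nat} (\<lambda>_. lborel)) =
    (\<integral>\<^sup>+x0. \<integral>\<^sup>+x1. f x0 x1 \<partial>lborel \<partial>lborel)"
proof -
  interpret product_sigma_finite "\<lambda>_::nat. lborel"
    by (simp add: product_sigma_finite_def lborel.sigma_finite_measure_axioms)
  have I: "{..<2::nat} = insert 1 {0}" by auto
  have "(\<lambda>x. (x 0, x 1)) \<in> measurable (PiM (insert 1 {0::nat}) (\<lambda>_. lborel)) (borel \<Otimes>\<^sub>M borel)"
    by measurable
  from measurable_comp[OF this f]
  have "(\<lambda>x. f (x 0) (x 1)) \<in> borel_measurable (PiM (insert 1 {0::nat}) (\<lambda>_. lborel))"
    by (simp add: comp_def)
  moreover have "(\<lambda>x. \<integral>\<^sup>+ y. f x y \<partial>lborel) \<in> borel_measurable borel"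
    using lborel.borel_measurable_nn_integral_fst[of "case_prod f" borel] f by simp
  ultimately show ?thesis
    unfolding I using product_nn_integral_insert[of "{0::nat}" "1::nat" "\<lambda>x. f (x 0) (x 1)"]
      product_nn_integral_singleton[of "\<lambda>x0. \<integral>\<^sup>+x1. f x0 x1 \<partial>lborel" 0]
    by simp
qed

text \<open>The straight line from a to b is the mean of the Brownian bridge.\<close>
definition bridge_deviation :: "(real \<Rightarrow> 'a \<Rightarrow> real) \<Rightarrow> real \<Rightarrow> real \<Rightarrow> 'a \<Rightarrow> real \<Rightarrow> real" where
  "bridge_deviation X a b \<omega> t = X t \<omega> - a - t * (b - a)"

lemma bes3_bridge_deviation_tail:
  assumes br: "bes3_bridge M X a b" and a: "0 < a" and b: "0 < b"
    and t: "0 < t" "t < 1" and \<delta>: "0 \<le> \<delta>"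
  shows "emeasure M {\<omega> \<in> space M. \<delta> < \<bar>bridge_deviation X a b \<omega> t\<bar>}
     \<le> ennreal (1 / (1 - exp (- 2 * a * b)) * (2 * exp (- \<delta>\<^sup>2 / (2 * (t * (1 - t))))))"
proof -
  define K where "K = 1 / (1 - exp (- 2 * a * b))"
  have K: "0 < K" unfolding K_def using a b by simp
  define ts where "ts = (\<lambda>i::nat. t)"
  define S where "S = {x \<in> space (PiM {..<1::nat} (\<lambda>_. borel::real measure)). \<delta> < \<bar>x 0 - a - t * (b - a)\<bar>}"
  define g where "g x0 = ennreal (heat_kernel t (x0 - a) * heat_kernel (1 - t) (b - x0) / heat_kernel 1 (b - a))
      * indicator {x. \<delta> < \<bar>x - a - t * (b - a)\<bar>} x0" for x0
  have g: "g \<in> borel_measurable borel"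
    unfolding g_def normal_density_def by measurable
  have "emeasure M {\<omega> \<in> space M. \<delta> < \<bar>bridge_deviation X a b \<omega> t\<bar>} =
      emeasure M {\<omega> \<in> space M. (\<lambda>i\<in>{..<1::nat}. X (ts i) \<omega>) \<in> S}"
    by (rule arg_cong[where f="emeasure M"]) (auto simp: S_def ts_def bridge_deviation_def space_PiM)
  also have "\<dots> =
      (\<integral>\<^sup>+x. ennreal (bes3_bridge_fdd a b 1 ts x) * indicator S x \<partial>PiM {..<1::nat} (\<lambda>_. lborel))"
    using t by (intro bes3_bridge_emeasure_fdd[OF br]) (auto simp: ts_def S_def)
  also have "\<dots> \<le> (\<integral>\<^sup>+x. ennreal K * g (x 0) \<partial>PiM {..<1::nat} (\<lambda>_. lborel))"
  proof (rule nn_integral_mono)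
    fix x :: "nat \<Rightarrow> real"
    assume x: "x \<in> space (PiM {..<1::nat} (\<lambda>_. lborel))"
    have "bes3_bridge_fdd a b 1 ts x =
        bes3_density t a (x 0) * bes3_density (1 - t) (x 0) b / bes3_density 1 a b"
      by (simp add: bes3_bridge_fdd_def ts_def)
    also have "\<dots> \<le> K * (heat_kernel t (x 0 - a) * heat_kernel (1 - t) (b - x 0) / heat_kernel 1 (b - a))"
      unfolding K_def using a b t by (intro divide_bes3_density_one_le bes3_density_mult_le) auto
    finally show "ennreal (bes3_bridge_fdd a b 1 ts x) * indicator S x \<le> ennreal K * g (x 0)"
      using x K by (auto simp: g_def S_def space_PiM ennreal_mult[symmetric] intro!: ennreal_leI
          split: split_indicator)
  qed
  also have "\<dots> = ennreal K * (\<integral>\<^sup>+x. g (x 0) \<partial>PiM {..<1::nat} (\<lambda>_. lborel))"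
  proof (rule nn_integral_cmult)
    show "(\<lambda>x. g (x 0)) \<in> borel_measurable (PiM {..<1::nat} (\<lambda>_. lborel))" using g by measurable
  qed
  also have "\<dots> = ennreal K * (\<integral>\<^sup>+x0. g x0 \<partial>lborel)"
    by (simp only: nn_integral_PiM_lessThan_1[OF g])
  also have "\<dots> \<le> ennreal K * ennreal (2 * exp (- \<delta>\<^sup>2 / (2 * (t * (1 - t)))))"
    unfolding g_def using t \<delta> by (intro mult_left_mono nn_integral_brownian_bridge_tail) auto
  also have "\<dots> = ennreal (K * (2 * exp (- \<delta>\<^sup>2 / (2 * (t * (1 - t))))))"
    using K by (simp add: ennreal_mult)
  finally show ?thesis unfolding K_def .
qed

lemma bes3_bridge_deviation_increment_tail:
  assumes br: "bes3_bridge M X a b" and a: "0 < a" and b: "0 < b"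
    and st: "0 < s" "s < t" "t < 1" and \<delta>: "0 \<le> \<delta>"
  shows "emeasure M {\<omega> \<in> space M. \<delta> < \<bar>bridge_deviation X a b \<omega> t - bridge_deviation X a b \<omega> s\<bar>}
     \<le> ennreal (1 / (1 - exp (- 2 * a * b)) * (2 * exp (- \<delta>\<^sup>2 / (2 * ((t - s) * (s + (1 - t)))))))"
proof -
  define K where "K = 1 / (1 - exp (- 2 * a * b))"
  have K: "0 < K" unfolding K_def using a b by simp
  define ts where "ts = (\<lambda>i::nat. if i = 0 then s else t)"
  define S where "S = {x \<in> space (PiM {..<2::nat} (\<lambda>_. borel::real measure)).
      \<delta> < \<bar>x 1 - x 0 - (t - s) * (b - a)\<bar>}"
  define g where "g x0 x1 = ennreal (heat_kernel s (x0 - a) * heat_kernel (t - s) (x1 - x0)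
        * heat_kernel (1 - t) (b - x1) / heat_kernel 1 (b - a))
      * indicator {p. \<delta> < \<bar>snd p - fst p - (t - s) * (b - a)\<bar>} (x0, x1)" for x0 x1
  have g: "case_prod g \<in> borel_measurable (borel \<Otimes>\<^sub>M borel)"
    unfolding g_def normal_density_def by measurable
  have "emeasure M {\<omega> \<in> space M. \<delta> < \<bar>bridge_deviation X a b \<omega> t - bridge_deviation X a b \<omega> s\<bar>} =
      emeasure M {\<omega> \<in> space M. (\<lambda>i\<in>{..<2::nat}. X (ts i) \<omega>) \<in> S}"
    by (rule arg_cong[where f="emeasure M"]) (auto simp: S_def ts_def bridge_deviation_def space_PiM algebra_simps)
  also have "\<dots> =
      (\<integral>\<^sup>+x. ennreal (bes3_bridge_fdd a b 2 ts x) * indicator S x \<partial>PiM {..<2::nat} (\<lambda>_. lborel))"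
    using st by (intro bes3_bridge_emeasure_fdd[OF br]) (auto simp: ts_def S_def less_Suc_eq)
  also have "\<dots> \<le> (\<integral>\<^sup>+x. ennreal K * g (x 0) (x 1) \<partial>PiM {..<2::nat} (\<lambda>_. lborel))"
  proof (rule nn_integral_mono)
    fix x :: "nat \<Rightarrow> real"
    assume x: "x \<in> space (PiM {..<2::nat} (\<lambda>_. lborel))"
    have "bes3_bridge_fdd a b 2 ts x = bes3_density s a (x 0) * bes3_density (t - s) (x 0) (x 1)
        * bes3_density (1 - t) (x 1) b / bes3_density 1 a b"
      by (simp add: bes3_bridge_fdd_def ts_def numeral_2_eq_2)
    also have "\<dots> \<le> K * (heat_kernel s (x 0 - a) * heat_kernel (t - s) (x 1 - x 0)
        * heat_kernel (1 - t) (b - x 1) / heat_kernel 1 (b - a))"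
      unfolding K_def using a b st by (intro divide_bes3_density_one_le bes3_density_mult3_le) auto
    finally show "ennreal (bes3_bridge_fdd a b 2 ts x) * indicator S x \<le> ennreal K * g (x 0) (x 1)"
      using x K by (auto simp: g_def S_def space_PiM ennreal_mult[symmetric] intro!: ennreal_leI
          split: split_indicator)
  qed
  also have "\<dots> = ennreal K * (\<integral>\<^sup>+x0. \<integral>\<^sup>+x1. g x0 x1 \<partial>lborel \<partial>lborel)"
  proof -
    have "(\<lambda>x. (x 0, x 1)) \<in> measurable (PiM {..<2::nat} (\<lambda>_. lborel)) (borel \<Otimes>\<^sub>M borel)"
      by measurable
    from measurable_comp[OF this g]
    have "(\<lambda>x. g (x 0) (x 1)) \<in> borel_measurable (PiM {..<2::nat} (\<lambda>_. lborel))"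
      by (simp add: comp_def)
    then show ?thesis by (simp only: nn_integral_cmult nn_integral_PiM_lessThan_2[OF g])
  qed
  also have "\<dots> \<le> ennreal K * ennreal (2 * exp (- \<delta>\<^sup>2 / (2 * ((t - s) * (s + (1 - t))))))"
    unfolding g_def using st \<delta> by (intro mult_left_mono nn_integral_brownian_bridge_increment_tail) auto
  also have "\<dots> = ennreal (K * (2 * exp (- \<delta>\<^sup>2 / (2 * ((t - s) * (s + (1 - t)))))))"
    using K by (simp add: ennreal_mult)
  finally show ?thesis unfolding K_def .
qed

section \<open>Dyadic chaining\<close>

text \<open>The chaining uses the dyadic intervals [j/2^k, (j+1)/2^k] with 0 < j and right endpoint
  below 7/8: their endpoints lie in (0,1), where the finite-dimensional distributions are
  prescribed, and they still reach every point of [0, 5/8].\<close>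
definition admissible_dyadic :: "nat \<Rightarrow> nat \<Rightarrow> bool" where
  "admissible_dyadic k j \<longleftrightarrow> 0 < j \<and> 8 * (j + 1) < 7 * 2 ^ k"

definition dyadic_increments_le :: "(real \<Rightarrow> real) \<Rightarrow> real \<Rightarrow> nat \<Rightarrow> bool" where
  "dyadic_increments_le f \<beta> k0 \<longleftrightarrow> (\<forall>k j. k0 \<le> k \<longrightarrow> admissible_dyadic k j \<longrightarrow>
     \<bar>f (real (j + 1) / 2 ^ k) - f (real j / 2 ^ k)\<bar> \<le> \<beta> * (3/4) ^ (k - k0))"

lemma admissible_dyadic_endpoints:
  assumes "admissible_dyadic k j"
  shows "real j / 2 ^ k \<in> {0<..<1}" "real (j + 1) / 2 ^ k \<in> {0<..<1}"
proof -
  have "j + 1 < 2 ^ k" "0 < j" using assms by (auto simp: admissible_dyadic_def)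
  then have "real (j + 1) < real (2 ^ k)" by (simp only: of_nat_less_iff)
  then have "1 + real j < 2 ^ k" by (simp only: of_nat_add of_nat_1 of_nat_power of_nat_numeral add.commute)
  then show "real j / 2 ^ k \<in> {0<..<1}" "real (j + 1) / 2 ^ k \<in> {0<..<1}"
    using \<open>0 < j\<close> \<open>j + 1 < 2 ^ k\<close> by (auto simp: field_simps)
qed

lemma finite_admissible_dyadic: "finite {j. admissible_dyadic k j}"
  by (rule finite_subset[of _ "{..<2^k}"]) (auto simp: admissible_dyadic_def)

lemma card_admissible_dyadic_le: "card {j. admissible_dyadic k j} \<le> 2 ^ k"
proof -
  have "card {j. admissible_dyadic k j} \<le> card {..<2^k::nat}"
    by (rule card_mono) (auto simp: admissible_dyadic_def)
  then show ?thesis by simp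
qed

text \<open>An index interval of length 2^n at level k0 + n + 1 splits into at most one interval at
  each end and the doubled interval of length 2^n at level k0 + n; the bounds (3/4)^k on
  single steps sum to a geometric series.\<close>
lemma dyadic_increments_le_telescope:
  assumes f: "dyadic_increments_le f \<beta> k0" and \<beta>: "0 \<le> \<beta>"
  shows "0 < p \<Longrightarrow> p \<le> q \<Longrightarrow> 8 * q < 7 * 2 ^ (k0 + n) \<Longrightarrow> q - p \<le> 2 ^ n \<Longrightarrow>
    \<bar>f (real q / 2 ^ (k0 + n)) - f (real p / 2 ^ (k0 + n))\<bar> \<le> 8 * \<beta> * (1 - (3/4) ^ (n + 1))"
proof (induction n arbitrary: p q)
  case 0
  then consider "q = p" | "q = p + 1" by fastforce
  then show ?case
  proof cases
    case 2
    with 0 have "admissible_dyadic k0 p" by (simp add: admissible_dyadic_def)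
    with f have "\<bar>f (real (p + 1) / 2 ^ k0) - f (real p / 2 ^ k0)\<bar> \<le> \<beta> * (3/4) ^ (k0 - k0)"
      unfolding dyadic_increments_le_def by blast
    with 2 \<beta> show ?thesis by simp
  qed (use \<beta> in simp)
next
  case (Suc n)
  define m where "m = k0 + n"
  have m: "k0 + Suc n = Suc m" by (simp add: m_def)
  define p' where "p' = (p + 1) div 2"
  define q' where "q' = q div 2"
  define d where "d = \<beta> * (3/4) ^ (n + 1)"
  have d: "0 \<le> d" using \<beta> by (simp add: d_def)
  have step: "\<bar>f (real (j + 1) / 2 ^ Suc m) - f (real j / 2 ^ Suc m)\<bar> \<le> d"
    if "admissible_dyadic (Suc m) j" for j
  proof -
    have "k0 \<le> Suc m" by (simp add: m_def)
    with f that have "\<bar>f (real (j + 1) / 2 ^ Suc m) - f (real j / 2 ^ Suc m)\<bar> \<le> \<beta> * (3/4) ^ (Suc m - k0)"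
      unfolding dyadic_increments_le_def by blast
    then show ?thesis by (simp add: d_def m_def Suc_diff_le)
  qed
  show ?case
  proof (cases "p' \<le> q'")
    case False
    then have "p = q" using Suc.prems(2) unfolding p'_def q'_def by presburger
    moreover have "(3/4::real) ^ (Suc n + 1) \<le> 1" by (rule power_le_one) auto
    ultimately show ?thesis using \<beta> by simp
  next
    case True
    have p': "0 < p'" using Suc.prems(1) by (simp add: p'_def)
    have IH: "\<bar>f (real q' / 2 ^ (k0 + n)) - f (real p' / 2 ^ (k0 + n))\<bar> \<le> 8 * \<beta> * (1 - (3/4) ^ (n + 1))"
      using Suc.prems p' True by (intro Suc.IH) (auto simp: p'_def q'_def m_def)
    have left: "\<bar>f (real (2 * p') / 2 ^ Suc m) - f (real p / 2 ^ Suc m)\<bar> \<le> d"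
    proof (cases "2 * p' = p")
      case False
      then have "2 * p' = p + 1" unfolding p'_def by presburger
      moreover have "admissible_dyadic (Suc m) p"
        using Suc.prems(1,3) True \<open>2 * p' = p + 1\<close> unfolding admissible_dyadic_def q'_def m by auto
      ultimately show ?thesis using step[of p] by simp
    qed (use d in simp)
    have right: "\<bar>f (real q / 2 ^ Suc m) - f (real (2 * q') / 2 ^ Suc m)\<bar> \<le> d"
    proof (cases "2 * q' = q")
      case False
      then have "q = 2 * q' + 1" unfolding q'_def by presburger
      moreover have "admissible_dyadic (Suc m) (2 * q')"
        using Suc.prems(3) p' True \<open>q = 2 * q' + 1\<close> unfolding admissible_dyadic_def m by auto
      ultimately show ?thesis using step[of "2 * q'"] by simp
    qed (use d in simp)
    have coarse: "real (2 * q') / 2 ^ Suc m = real q' / 2 ^ (k0 + n)"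
      "real (2 * p') / 2 ^ Suc m = real p' / 2 ^ (k0 + n)"
      by (simp_all add: m_def)
    have middle: "\<bar>f (real (2 * q') / 2 ^ Suc m) - f (real (2 * p') / 2 ^ Suc m)\<bar>
        \<le> 8 * \<beta> * (1 - (3/4) ^ (n + 1))"
      unfolding coarse by (rule IH)
    have "\<bar>f (real q / 2 ^ Suc m) - f (real p / 2 ^ Suc m)\<bar> \<le> d + 8 * \<beta> * (1 - (3/4) ^ (n + 1)) + d"
      using left middle right by linarith
    also have "\<dots> = 8 * \<beta> * (1 - (3/4) ^ (Suc n + 1))" by (simp add: d_def algebra_simps)
    finally show ?thesis unfolding m .
  qed
qed

definition dyadic_above :: "nat \<Rightarrow> real \<Rightarrow> nat" where
  "dyadic_above m s = nat \<lfloor>s * 2 ^ m\<rfloor> + 1"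

lemma dyadic_above_bounds:
  assumes "0 \<le> s"
  shows "s * 2 ^ m < real (dyadic_above m s)" "real (dyadic_above m s) \<le> s * 2 ^ m + 1"
proof -
  have "real (nat \<lfloor>s * 2 ^ m\<rfloor>) = of_int \<lfloor>s * 2 ^ m\<rfloor>" using assms by simp
  then show "s * 2 ^ m < real (dyadic_above m s)" "real (dyadic_above m s) \<le> s * 2 ^ m + 1"
    unfolding dyadic_above_def by linarith+
qed

lemma tendsto_dyadic_above:
  assumes "0 \<le> s"
  shows "(\<lambda>m. real (dyadic_above m s) / 2 ^ m) \<longlonglongrightarrow> s"
proof (rule tendsto_sandwich[where f="\<lambda>_. s" and h="\<lambda>m. s + (1/2) ^ m"])
  show "\<forall>\<^sub>F m in sequentially. s \<le> real (dyadic_above m s) / 2 ^ m"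
    using dyadic_above_bounds(1)[OF assms] by (auto simp: field_simps less_imp_le)
  show "\<forall>\<^sub>F m in sequentially. real (dyadic_above m s) / 2 ^ m \<le> s + (1/2) ^ m"
    using dyadic_above_bounds(2)[OF assms] by (auto simp: field_simps power_divide)
  have "(\<lambda>m. s + (1/2::real) ^ m) \<longlonglongrightarrow> s + 0"
    by (intro tendsto_intros LIMSEQ_realpow_zero) auto
  then show "(\<lambda>m. s + (1/2::real) ^ m) \<longlonglongrightarrow> s" by simp
qed simp

lemma dyadic_above_le_one:
  assumes "0 \<le> s" "s \<le> 5/8" "2 \<le> m"
  shows "real (dyadic_above m s) / 2 ^ m \<le> 1"
proof -
  have "(4::real) \<le> 2 ^ m" using power_increasing[of 2 m "2::real"] assms by simp
  moreover have "s * 2 ^ m \<le> 5/8 * 2 ^ m" using assms by (intro mult_right_mono) auto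
  ultimately have "real (dyadic_above m s) \<le> 2 ^ m"
    using dyadic_above_bounds(2)[OF assms(1), of m] by linarith
  then show ?thesis by simp
qed

lemma dyadic_increments_le_dyadic_above:
  assumes f: "dyadic_increments_le f \<beta> k0" and \<beta>: "0 \<le> \<beta>"
    and st: "0 \<le> s" "s \<le> t" "t \<le> 5/8" "2 * (t - s) * 2 ^ k0 \<le> 1" and m: "k0 + 3 \<le> m"
  shows "\<bar>f (real (dyadic_above m t) / 2 ^ m) - f (real (dyadic_above m s) / 2 ^ m)\<bar> \<le> 8 * \<beta>"
proof -
  define n where "n = m - k0"
  have mn: "m = k0 + n" and n: "3 \<le> n" using m by (auto simp: n_def)
  have t: "0 \<le> t" using st by simp
  define P where "P = dyadic_above m s"
  define Q where "Q = dyadic_above m t"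
  have PQ: "P \<le> Q" unfolding P_def Q_def dyadic_above_def using st
    by (intro add_right_mono nat_mono floor_mono) simp
  have "(8::real) \<le> 2 ^ m" using power_increasing[of 3 m "2::real"] m by simp
  moreover have "t * 2 ^ m \<le> 5/8 * 2 ^ m" using st by (intro mult_right_mono) auto
  ultimately have "8 * real Q < 7 * 2 ^ m"
    using dyadic_above_bounds(2)[OF t, of m] unfolding Q_def by linarith
  then have "real (8 * Q) < real (7 * 2 ^ m)" by simp
  then have Q: "8 * Q < 7 * 2 ^ (k0 + n)" unfolding mn of_nat_less_iff .
  have "real Q - real P < (t - s) * 2 ^ m + 1"
    using dyadic_above_bounds[OF st(1), of m] dyadic_above_bounds[OF t, of m]
    unfolding P_def Q_def by (simp add: algebra_simps)
  also have "(t - s) * 2 ^ m = (2 * (t - s) * 2 ^ k0) * 2 ^ n / 2" by (simp add: mn power_add)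
  also have "\<dots> \<le> 2 ^ n / 2" using st by (intro divide_right_mono mult_left_le_one_le) auto
  finally have "real (Q - P) < 2 ^ n / 2 + 1" using PQ by (simp add: of_nat_diff)
  moreover have "(2::real) \<le> 2 ^ n" using power_increasing[of 1 n "2::real"] n by simp
  ultimately have "real (Q - P) < real (2 ^ n + 1)" by simp
  then have "Q - P \<le> 2 ^ n" by linarith
  then have "\<bar>f (real Q / 2 ^ (k0 + n)) - f (real P / 2 ^ (k0 + n))\<bar> \<le> 8 * \<beta> * (1 - (3/4) ^ (n + 1))"
    using PQ Q by (intro dyadic_increments_le_telescope[OF f \<beta>]) (auto simp: P_def dyadic_above_def)
  also have "\<dots> \<le> 8 * \<beta>" using \<beta> by (simp add: mult_left_le)
  finally show ?thesis unfolding mn P_def Q_def .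
qed

lemma dyadic_increments_le_imp_abs_diff_le:
  assumes cont: "continuous_on {0..1} f" and f: "dyadic_increments_le f \<beta> k0" and \<beta>: "0 \<le> \<beta>"
    and s: "s \<in> {0..5/8}" and t: "t \<in> {0..5/8}" and st: "2 * \<bar>t - s\<bar> * 2 ^ k0 \<le> 1"
  shows "\<bar>f t - f s\<bar> \<le> 8 * \<beta>"
proof -
  have *: "\<bar>f t - f s\<bar> \<le> 8 * \<beta>"
    if s: "s \<in> {0..5/8}" and t: "t \<in> {0..5/8}" and st: "s \<le> t" "2 * (t - s) * 2 ^ k0 \<le> 1" for s t
  proof -
    have lim: "(\<lambda>m. f (real (dyadic_above m u) / 2 ^ m)) \<longlonglongrightarrow> f u" if "u \<in> {0..5/8}" for u
      using that dyadic_above_le_one[of u]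
      by (intro continuous_on_tendsto_compose[OF cont tendsto_dyadic_above])
        (auto intro!: eventually_sequentiallyI[of 2])
    have "(\<lambda>m. \<bar>f (real (dyadic_above m t) / 2 ^ m) - f (real (dyadic_above m s) / 2 ^ m)\<bar>)
        \<longlonglongrightarrow> \<bar>f t - f s\<bar>"
      using s t by (intro tendsto_intros lim)
    then show ?thesis
      by (rule tendsto_upperbound) (use s t st in \<open>auto intro!: eventually_sequentiallyI[of "k0 + 3"]
          dyadic_increments_le_dyadic_above[OF f \<beta>]\<close>)
  qed
  show ?thesis
  proof (cases "s \<le> t")
    case False
    then show ?thesis using *[OF t s] st by (simp add: abs_minus_commute)
  qed (use * s t st in simp)
qed

section \<open>Probability of a large dyadic increment\<close>

text \<open>At level k0 + i the increment has variance at most 2^-(k0+i), and the threshold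
  decays like (3/4)^i, so the Gaussian exponent grows like (9/8)^i \<ge> 1 + i/8.\<close>
lemma bes3_bridge_dyadic_increment_tail:
  assumes br: "bes3_bridge M X a b" and a: "0 < a" and b: "0 < b"
    and j: "admissible_dyadic (k0 + i) j" and \<beta>: "0 \<le> \<beta>"
  shows "emeasure M {\<omega> \<in> space M. \<beta> * (3/4) ^ i <
      \<bar>bridge_deviation X a b \<omega> (real (j + 1) / 2 ^ (k0 + i)) - bridge_deviation X a b \<omega> (real j / 2 ^ (k0 + i))\<bar>}
    \<le> ennreal (1 / (1 - exp (- 2 * a * b)) * (2 * exp (- (\<beta>\<^sup>2 * 2 ^ k0 / 2 * (1 + real i / 8)))))"
proof -
  define s where "s = real j / 2 ^ (k0 + i)"
  define t where "t = real (j + 1) / 2 ^ (k0 + i)"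
  define h where "h = (1::real) / 2 ^ (k0 + i)"
  define \<delta> where "\<delta> = \<beta> * (3/4) ^ i"
  have s: "0 < s" and t: "t < 1" using admissible_dyadic_endpoints[OF j] by (auto simp: s_def t_def)
  have st: "s < t" by (simp add: s_def t_def divide_strict_right_mono)
  have h: "t - s = h" "s + (1 - t) = 1 - h"
    by (simp_all add: s_def t_def h_def diff_divide_distrib[symmetric])
  have h0: "0 < h" by (simp add: h_def)
  have h1: "0 < 1 - h" using s t h(1) by linarith
  have \<delta>: "0 \<le> \<delta>" using \<beta> by (simp add: \<delta>_def)
  have "1 + real i / 8 \<le> (9/8) ^ i"
    using Bernoulli_inequality[of "1/8" i] by simp
  also have "(9/8::real) ^ i = ((3/4) ^ i)\<^sup>2 * 2 ^ i"
  proof -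
    have "((3/4::real) ^ i)\<^sup>2 * 2 ^ i = (3/4 * (3/4) * 2) ^ i"
      by (simp only: power_mult_distrib power2_eq_square)
    then show ?thesis by simp
  qed
  finally have "\<beta>\<^sup>2 * 2 ^ k0 / 2 * (1 + real i / 8) \<le> \<beta>\<^sup>2 * 2 ^ k0 / 2 * (((3/4) ^ i)\<^sup>2 * 2 ^ i)"
    by (intro mult_left_mono) auto
  also have "\<dots> = \<delta>\<^sup>2 / (2 * h)"
    by (simp add: \<delta>_def h_def power_add power_mult_distrib field_simps)
  also have "\<dots> \<le> \<delta>\<^sup>2 / (2 * ((t - s) * (s + (1 - t))))"
    unfolding h using h0 h1 by (intro divide_left_mono mult_left_mono mult_pos_pos)
      (auto simp: mult_le_cancel_left1)
  finally have exponent: "\<beta>\<^sup>2 * 2 ^ k0 / 2 * (1 + real i / 8) \<le> \<delta>\<^sup>2 / (2 * ((t - s) * (s + (1 - t))))" .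
  have "emeasure M {\<omega> \<in> space M. \<delta> < \<bar>bridge_deviation X a b \<omega> t - bridge_deviation X a b \<omega> s\<bar>}
      \<le> ennreal (1 / (1 - exp (- 2 * a * b)) * (2 * exp (- \<delta>\<^sup>2 / (2 * ((t - s) * (s + (1 - t)))))))"
    by (rule bes3_bridge_deviation_increment_tail[OF br a b s st t \<delta>])
  also have "\<dots> \<le> ennreal (1 / (1 - exp (- 2 * a * b)) * (2 * exp (- (\<beta>\<^sup>2 * 2 ^ k0 / 2 * (1 + real i / 8)))))"
    using a b exponent by (intro ennreal_leI mult_left_mono) auto
  finally show ?thesis unfolding \<delta>_def s_def t_def .
qed

lemma emeasure_UN_admissible_dyadic_le:
  assumes sets: "\<And>j. admissible_dyadic k j \<Longrightarrow> A j \<in> sets M"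
    and le: "\<And>j. admissible_dyadic k j \<Longrightarrow> emeasure M (A j) \<le> ennreal p" and p: "0 \<le> p"
  shows "emeasure M (\<Union>j\<in>{j. admissible_dyadic k j}. A j) \<le> ennreal (2 ^ k * p)"
proof -
  have "emeasure M (\<Union>j\<in>{j. admissible_dyadic k j}. A j) \<le> (\<Sum>j\<in>{j. admissible_dyadic k j}. emeasure M (A j))"
    using sets finite_admissible_dyadic by (intro emeasure_subadditive_finite) auto
  also have "\<dots> \<le> (\<Sum>j\<in>{j. admissible_dyadic k j}. ennreal p)" by (intro sum_mono le) auto
  also have "\<dots> = ennreal (real (card {j. admissible_dyadic k j}) * p)"
    using p by (simp add: ennreal_mult ennreal_of_nat_eq_real_of_nat)
  also have "\<dots> \<le> ennreal (2 ^ k * p)"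
    using card_admissible_dyadic_le[of k] p
    by (intro ennreal_leI mult_right_mono) (auto simp flip: of_nat_le_iff)
  finally show ?thesis .
qed

lemma emeasure_UN_le_geometric:
  assumes sets: "\<And>i. U i \<in> sets M"
    and le: "\<And>i. emeasure M (U i) \<le> ennreal (2 ^ (k0 + i) * (c * exp (- (D * (1 + real i / 8)))))"
    and c: "0 \<le> c" and D: "16 \<le> D"
  shows "emeasure M (\<Union>i. U i) \<le> ennreal (2 * c * 2 ^ k0 * exp (- D))"
proof -
  define q where "q = 2 * exp (- D / 8)"
  have "exp (- D / 8) \<le> exp (-2)" using D by simp
  moreover have "exp (-2::real) \<le> 1/4"
  proof -
    have "2 * 2 \<le> exp (1::real) * exp 1"
      using exp_ge_add_one_self[of 1] by (intro mult_mono) auto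
    then show ?thesis by (simp add: mult_exp_exp exp_minus field_simps)
  qed
  ultimately have q: "0 \<le> q" "q \<le> 1/2" unfolding q_def by (simp, linarith)
  define g where "g i = (c * 2 ^ k0 * exp (- D)) * q ^ i" for i :: nat
  have g: "2 ^ (k0 + i) * (c * exp (- (D * (1 + real i / 8)))) = g i" for i
  proof -
    have "exp (- (D * (1 + real i / 8))) = exp (- D) * exp (- D / 8) ^ i"
      by (simp add: mult_exp_exp exp_of_nat_mult[symmetric] algebra_simps)
    then show ?thesis unfolding g_def q_def by (simp add: power_add power_mult_distrib)
  qed
  have sq: "summable (\<lambda>i. q ^ i)" using q by (intro summable_geometric) auto
  have "(\<Sum>i. g i) = (c * 2 ^ k0 * exp (- D)) * (1 / (1 - q))"
    unfolding g_def using sq q by (simp add: suminf_mult suminf_geometric)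
  also have "\<dots> \<le> (c * 2 ^ k0 * exp (- D)) * 2"
    using q c by (intro mult_left_mono) (auto simp: field_simps)
  finally have sum_g: "(\<Sum>i. g i) \<le> 2 * c * 2 ^ k0 * exp (- D)" by (simp add: mult_ac)
  have "emeasure M (\<Union>i. U i) \<le> (\<Sum>i. emeasure M (U i))"
    using sets by (intro emeasure_subadditive_countably) auto
  also have "\<dots> \<le> (\<Sum>i. ennreal (g i))"
    by (intro suminf_le) (use le g in auto)
  also have "\<dots> = ennreal (\<Sum>i. g i)"
    using c q sq by (intro suminf_ennreal2) (auto simp: g_def intro: summable_mult)
  also have "\<dots> \<le> ennreal (2 * c * 2 ^ k0 * exp (- D))"
    using sum_g by (rule ennreal_leI)
  finally show ?thesis .
qed

lemma bridge_deviation_measurable: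
  assumes "bes3_bridge M X a b" "t \<in> {0..1}"
  shows "(\<lambda>\<omega>. bridge_deviation X a b \<omega> t) \<in> borel_measurable M"
proof -
  have "X t \<in> borel_measurable M" using assms by (simp add: bes3_bridge_def)
  then show ?thesis unfolding bridge_deviation_def by measurable
qed

lemma bes3_bridge_not_dyadic_increments_le:
  assumes br: "bes3_bridge M X a b" and a: "0 < a" and b: "0 < b" and \<beta>: "0 \<le> \<beta>"
    and G: "16 \<le> G" "G \<le> \<beta>\<^sup>2 * 2 ^ k0 / 2"
  defines "B \<equiv> {\<omega> \<in> space M. \<not> dyadic_increments_le (bridge_deviation X a b \<omega>) \<beta> k0}"
  shows "B \<in> sets M" and "measure M B \<le> 4 / (1 - exp (- 2 * a * b)) * 2 ^ k0 * exp (- G)"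
proof -
  interpret prob_space M using br by (simp add: bes3_bridge_def)
  define Kf where "Kf = 1 / (1 - exp (- 2 * a * b))"
  have Kf: "0 \<le> Kf" unfolding Kf_def using a b by simp
  define A where "A i j = {\<omega> \<in> space M. \<beta> * (3/4) ^ i < \<bar>bridge_deviation X a b \<omega> (real (j + 1) / 2 ^ (k0 + i))
      - bridge_deviation X a b \<omega> (real j / 2 ^ (k0 + i))\<bar>}" for i j
  define U where "U i = (\<Union>j\<in>{j. admissible_dyadic (k0 + i) j}. A i j)" for i
  have B_eq: "B = (\<Union>i. U i)"
  proof (intro set_eqI iffI)
    fix \<omega> assume "\<omega> \<in> B"
    then obtain k j where "\<omega> \<in> space M" "k0 \<le> k" "admissible_dyadic k j"
      "\<beta> * (3/4) ^ (k - k0) < \<bar>bridge_deviation X a b \<omega> (real (j + 1) / 2 ^ k) - bridge_deviation X a b \<omega> (real j / 2 ^ k)\<bar>"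
      by (auto simp: B_def dyadic_increments_le_def not_le)
    then show "\<omega> \<in> (\<Union>i. U i)"
      unfolding U_def A_def by (intro UN_I[of "k - k0"] UN_I[of j]) auto
  next
    fix \<omega> assume "\<omega> \<in> (\<Union>i. U i)"
    then obtain i j where "\<omega> \<in> space M" "admissible_dyadic (k0 + i) j"
      "\<beta> * (3/4) ^ i < \<bar>bridge_deviation X a b \<omega> (real (j + 1) / 2 ^ (k0 + i))
        - bridge_deviation X a b \<omega> (real j / 2 ^ (k0 + i))\<bar>"
      by (auto simp: U_def A_def)
    then show "\<omega> \<in> B"
      unfolding B_def dyadic_increments_le_def not_le not_all not_imp
      by (intro CollectI conjI exI[of _ "k0 + i"] exI[of _ j]) auto
  qed
  have A_sets: "A i j \<in> sets M" if "admissible_dyadic (k0 + i) j" for i j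
  proof -
    have "(\<lambda>\<omega>. bridge_deviation X a b \<omega> (real (j + 1) / 2 ^ (k0 + i))) \<in> borel_measurable M"
      "(\<lambda>\<omega>. bridge_deviation X a b \<omega> (real j / 2 ^ (k0 + i))) \<in> borel_measurable M"
      using admissible_dyadic_endpoints[OF that] by (auto intro!: bridge_deviation_measurable[OF br])
    then show ?thesis unfolding A_def by measurable
  qed
  have U_sets: "U i \<in> sets M" for i
    unfolding U_def by (intro sets.finite_UN finite_admissible_dyadic A_sets) auto
  then show "B \<in> sets M" unfolding B_eq by auto
  have "emeasure M B \<le> ennreal (2 * (2 * Kf) * 2 ^ k0 * exp (- (\<beta>\<^sup>2 * 2 ^ k0 / 2)))"
    unfolding B_eq
  proof (rule emeasure_UN_le_geometric[OF U_sets])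
    show "emeasure M (U i) \<le> ennreal (2 ^ (k0 + i) * (2 * Kf * exp (- (\<beta>\<^sup>2 * 2 ^ k0 / 2 * (1 + real i / 8)))))"
      for i unfolding U_def
      using A_sets Kf bes3_bridge_dyadic_increment_tail[OF br a b _ \<beta>]
      by (intro emeasure_UN_admissible_dyadic_le) (auto simp: A_def Kf_def mult_ac)
  qed (use Kf G in auto)
  also have "\<dots> \<le> ennreal (2 * (2 * Kf) * 2 ^ k0 * exp (- G))"
    using G Kf by (intro ennreal_leI mult_left_mono) auto
  finally show "measure M B \<le> 4 / (1 - exp (- 2 * a * b)) * 2 ^ k0 * exp (- G)"
    using Kf by (simp add: emeasure_eq_measure Kf_def)
qed

section \<open>Paths with controlled dyadic increments\<close>

lemma hit_time_le_ereal:
  assumes "hit_time X L \<omega> \<le> ereal c"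
  obtains s where "hit_time X L \<omega> = ereal s" "0 \<le> s" "s \<le> c"
    "\<And>\<eta>. 0 < \<eta> \<Longrightarrow> \<exists>r. s \<le> r \<and> r < s + \<eta> \<and> L \<le> X r \<omega>"
proof -
  define S where "S = {r \<in> {0..1}. L \<le> X r \<omega>}"
  have hit: "hit_time X L \<omega> = Inf (ereal ` S)" unfolding hit_time_def S_def ..
  have S: "S \<noteq> {}"
  proof
    assume "S = {}"
    then have "hit_time X L \<omega> = \<infinity>" unfolding hit by (simp add: top_ereal_def)
    then show False using assms by simp
  qed
  have S_bdd: "bdd_below S" unfolding S_def by (rule bdd_belowI[of _ 0]) auto
  show ?thesis
  proof
    show "hit_time X L \<omega> = ereal (Inf S)" unfolding hit using ereal_Inf'[OF S_bdd S] by simp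
    then show "Inf S \<le> c" using assms by simp
    show "0 \<le> Inf S" using S by (intro cInf_greatest) (auto simp: S_def)
    show "\<exists>r. Inf S \<le> r \<and> r < Inf S + \<eta> \<and> L \<le> X r \<omega>" if \<eta>: "0 < \<eta>" for \<eta>
    proof -
      obtain r where "r \<in> S" "r < Inf S + \<eta>" using cInf_lessD[OF S, of "Inf S + \<eta>"] \<eta> by auto
      then show ?thesis using cInf_lower[OF _ S_bdd] by (auto simp: S_def)
    qed
  qed
qed

text \<open>Below the threshold K / (5 \<epsilon>) the drift b - a moves the path by at most K/5 over time
  \<epsilon>; if b > a the near-hitting time r' is taken within K / (5 (b - a)) of s, so that
  going back from r' to s + r costs at most K/5 as well.\<close>
lemma high_after_hit_moderate_drift:
  fixes X :: "real \<Rightarrow> 'a \<Rightarrow> real"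
  assumes cont: "continuous_on {0..1} (\<lambda>t. X t \<omega>)"
    and dev: "dyadic_increments_le (bridge_deviation X a b \<omega>) (K / 40) k0"
    and K: "0 < K" and \<epsilon>: "0 < \<epsilon>" "\<epsilon> \<le> 1/8" and k0: "2 * \<epsilon> * 2 ^ k0 \<le> 1"
    and drift: "a - b \<le> K / (5 * \<epsilon>)"
    and s: "0 \<le> s" "s \<le> 1/2" and hit: "\<And>\<eta>. 0 < \<eta> \<Longrightarrow> \<exists>r. s \<le> r \<and> r < s + \<eta> \<and> 2 * K \<le> X r \<omega>"
    and r: "r \<in> {0..\<epsilon>}"
  shows "8 * K / 5 \<le> X (s + r) \<omega>"
proof -
  define f where "f = bridge_deviation X a b \<omega>"
  have f_cont: "continuous_on {0..1} f"
    unfolding f_def bridge_deviation_def by (intro continuous_intros cont)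
  define \<eta> where "\<eta> = (if 0 < b - a then min \<epsilon> (K / (5 * (b - a))) else \<epsilon>)"
  have \<eta>: "0 < \<eta>" "\<eta> \<le> \<epsilon>" unfolding \<eta>_def using \<epsilon> K by auto
  obtain r' where r': "s \<le> r'" "r' < s + \<eta>" "2 * K \<le> X r' \<omega>" using hit[OF \<eta>(1)] by blast
  have "\<bar>f (s + r) - f r'\<bar> \<le> 8 * (K / 40)"
  proof (rule dyadic_increments_le_imp_abs_diff_le[OF f_cont dev[folded f_def]])
    show "0 \<le> K / 40" using K by simp
    show "s + r \<in> {0..5/8}" "r' \<in> {0..5/8}" using r r' s \<epsilon> \<eta> by auto
    have "\<bar>s + r - r'\<bar> \<le> \<epsilon>" using r r' \<eta> by auto
    then have "2 * \<bar>s + r - r'\<bar> * 2 ^ k0 \<le> 2 * \<epsilon> * 2 ^ k0" by (intro mult_right_mono) auto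
    then show "2 * \<bar>s + r - r'\<bar> * 2 ^ k0 \<le> 1" using k0 by linarith
  qed
  moreover have "- (K / 5) \<le> (s + r - r') * (b - a)"
  proof (cases "0 < b - a")
    case True
    then have "\<eta> \<le> K / (5 * (b - a))" unfolding \<eta>_def by simp
    then have "\<eta> * (b - a) \<le> K / 5" using True by (simp add: field_simps)
    moreover have "- \<eta> * (b - a) \<le> (s + r - r') * (b - a)"
      using True r r' by (intro mult_right_mono) auto
    ultimately show ?thesis by simp
  next
    case False
    have "\<epsilon> * (b - a) \<le> (s + r - r') * (b - a)"
      using False r r' by (intro mult_right_mono_neg) auto
    moreover have "- (K / 5) \<le> \<epsilon> * (b - a)" using drift \<epsilon> by (simp add: field_simps)
    ultimately show ?thesis by simp
  qed
  moreover have "X (s + r) \<omega> = X r' \<omega> + (f (s + r) - f r') + (s + r - r') * (b - a)"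
    by (simp add: f_def bridge_deviation_def algebra_simps)
  ultimately show ?thesis using r'(3) unfolding abs_le_iff by linarith
qed

lemma high_large_start:
  fixes X :: "real \<Rightarrow> 'a \<Rightarrow> real"
  assumes cont: "continuous_on {0..1} (\<lambda>t. X t \<omega>)"
    and dev: "dyadic_increments_le (bridge_deviation X a b \<omega>) (a / 128) 0"
    and mid: "\<bar>bridge_deviation X a b \<omega> (1/2)\<bar> \<le> a / 16"
    and a: "0 < a" and b: "0 < b" and t: "t \<in> {0..5/8}"
  shows "a / 4 \<le> X t \<omega>"
proof -
  define f where "f = bridge_deviation X a b \<omega>"
  have f_cont: "continuous_on {0..1} f"
    unfolding f_def bridge_deviation_def by (intro continuous_intros cont)
  have "\<bar>f t - f (1/2)\<bar> \<le> 8 * (a / 128)"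
    using t a by (intro dyadic_increments_le_imp_abs_diff_le[OF f_cont dev[folded f_def]])
      (auto simp: abs_if)
  moreover have "X t \<omega> = (1 - t) * a + t * b + f t"
    by (simp add: f_def bridge_deviation_def algebra_simps)
  moreover have "3/8 * a \<le> (1 - t) * a" using t a by (intro mult_right_mono) auto
  moreover have "0 \<le> t * b" using t b by simp
  ultimately show ?thesis using mid unfolding f_def by linarith
qed

lemma no_dip_after_hit:
  fixes X :: "real \<Rightarrow> 'a \<Rightarrow> real"
  assumes cont: "continuous_on {0..1} (\<lambda>t. X t \<omega>)"
    and K: "0 < K" and \<epsilon>: "0 < \<epsilon>" "\<epsilon> \<le> 1/32" and k0: "2 * \<epsilon> * 2 ^ k0 \<le> 1"
    and a: "0 < a" and b: "0 < b"
    and dev: "dyadic_increments_le (bridge_deviation X a b \<omega>) (K / 40) k0"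
    and dev_large_drift: "K / (5 * \<epsilon>) < a - b \<Longrightarrow>
      dyadic_increments_le (bridge_deviation X a b \<omega>) (a / 128) 0 \<and>
      \<bar>bridge_deviation X a b \<omega> (1/2)\<bar> \<le> a / 16"
  shows "\<not> (hit_time X (2 * K) \<omega> \<le> 1/2 \<and>
      (INF r\<in>{0..\<epsilon>}. X (real_of_ereal (hit_time X (2 * K) \<omega>) + r) \<omega>) \<le> 3 * K / 2)"
proof
  assume H: "hit_time X (2 * K) \<omega> \<le> 1/2 \<and>
      (INF r\<in>{0..\<epsilon>}. X (real_of_ereal (hit_time X (2 * K) \<omega>) + r) \<omega>) \<le> 3 * K / 2"
  have "(1/2::ereal) = ereal (1/2)"
    by (metis ereal_divide numeral_eq_ereal one_ereal_def zero_neq_numeral)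
  then obtain s where hit_eq: "hit_time X (2 * K) \<omega> = ereal s" and s: "0 \<le> s" "s \<le> 1/2"
    and hit: "\<And>\<eta>. 0 < \<eta> \<Longrightarrow> \<exists>r. s \<le> r \<and> r < s + \<eta> \<and> 2 * K \<le> X r \<omega>"
    using H hit_time_le_ereal[of X "2 * K" \<omega> "1/2"] by auto
  have "8 * K / 5 \<le> X (s + r) \<omega>" if r: "r \<in> {0..\<epsilon>}" for r
  proof (cases "K / (5 * \<epsilon>) < a - b")
    case True
    have "K / (5 * \<epsilon>) < a" using True b by linarith
    then have "K < 5 * \<epsilon> * a" using \<epsilon> by (simp add: field_simps)
    also have "\<dots> \<le> 5 / 32 * a" using \<epsilon> a by (intro mult_right_mono) auto
    finally have "8 * K / 5 \<le> a / 4" by simp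
    also have "\<dots> \<le> X (s + r) \<omega>"
      using dev_large_drift[OF True] r s \<epsilon> by (intro high_large_start[where X=X and \<omega>=\<omega>, OF cont _ _ a b]) auto
    finally show ?thesis .
  qed (use high_after_hit_moderate_drift[where X=X and \<omega>=\<omega>, OF cont dev K \<epsilon>(1) _ k0 _ s hit r] \<epsilon> in auto)
  then have "8 * K / 5 \<le> (INF r\<in>{0..\<epsilon>}. X (real_of_ereal (hit_time X (2 * K) \<omega>) + r) \<omega>)"
    unfolding hit_eq real_of_ereal.simps using \<epsilon> by (intro cINF_greatest) auto
  then show False using H K by simp
qed

lemma bes3_bridge_midpoint_deviation:
  assumes br: "bes3_bridge M X a b" and a: "0 < a" and b: "0 < b"
  shows "{\<omega> \<in> space M. a / 16 < \<bar>bridge_deviation X a b \<omega> (1/2)\<bar>} \<in> sets M"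
    and "measure M {\<omega> \<in> space M. a / 16 < \<bar>bridge_deviation X a b \<omega> (1/2)\<bar>}
      \<le> 2 / (1 - exp (- 2 * a * b)) * exp (- a\<^sup>2 / 128)"
proof -
  interpret prob_space M using br by (simp add: bes3_bridge_def)
  show "{\<omega> \<in> space M. a / 16 < \<bar>bridge_deviation X a b \<omega> (1/2)\<bar>} \<in> sets M"
    using bridge_deviation_measurable[OF br, of "1/2"] by measurable
  have "emeasure M {\<omega> \<in> space M. a / 16 < \<bar>bridge_deviation X a b \<omega> (1/2)\<bar>}
      \<le> ennreal (1 / (1 - exp (- 2 * a * b)) * (2 * exp (- (a / 16)\<^sup>2 / (2 * (1/2 * (1 - 1/2))))))"
    using a by (intro bes3_bridge_deviation_tail[OF br a b]) auto
  moreover have "- (a / 16)\<^sup>2 / (2 * (1/2 * (1 - 1/2))) = - a\<^sup>2 / 128" by (simp add: power2_eq_square)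
  ultimately show "measure M {\<omega> \<in> space M. a / 16 < \<bar>bridge_deviation X a b \<omega> (1/2)\<bar>}
      \<le> 2 / (1 - exp (- 2 * a * b)) * exp (- a\<^sup>2 / 128)"
    using a b by (simp only:) (simp add: emeasure_eq_measure)
qed

lemma dip_after_hit_subset:
  fixes M :: "'a measure" and X :: "real \<Rightarrow> 'a \<Rightarrow> real"
  assumes br: "bes3_bridge M X a b"
    and K: "0 < K" and \<epsilon>: "0 < \<epsilon>" "\<epsilon> \<le> 1/32" and k0: "2 * \<epsilon> * 2 ^ k0 \<le> 1"
    and a: "0 < a" and b: "0 < b"
  shows "{\<omega> \<in> space M. hit_time X (2 * K) \<omega> \<le> 1/2 \<and>
      (INF r\<in>{0..\<epsilon>}. X (real_of_ereal (hit_time X (2 * K) \<omega>) + r) \<omega>) \<le> 3 * K / 2} \<subseteq>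
    {\<omega> \<in> space M. \<not> dyadic_increments_le (bridge_deviation X a b \<omega>) (K / 40) k0} \<union>
    (if K / (5 * \<epsilon>) < a - b then
      {\<omega> \<in> space M. \<not> dyadic_increments_le (bridge_deviation X a b \<omega>) (a / 128) 0} \<union>
      {\<omega> \<in> space M. a / 16 < \<bar>bridge_deviation X a b \<omega> (1/2)\<bar>}
     else {})"
proof (intro subsetI)
  fix \<omega> assume \<omega>: "\<omega> \<in> {\<omega> \<in> space M. hit_time X (2 * K) \<omega> \<le> 1/2 \<and>
      (INF r\<in>{0..\<epsilon>}. X (real_of_ereal (hit_time X (2 * K) \<omega>) + r) \<omega>) \<le> 3 * K / 2}"
  have cont: "continuous_on {0..1} (\<lambda>t. X t \<omega>)" using br \<omega> by (simp add: bes3_bridge_def)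
  from \<omega> no_dip_after_hit[where X=X and \<omega>=\<omega>, OF cont K \<epsilon> k0 a b]
  show "\<omega> \<in> {\<omega> \<in> space M. \<not> dyadic_increments_le (bridge_deviation X a b \<omega>) (K / 40) k0} \<union>
    (if K / (5 * \<epsilon>) < a - b then
      {\<omega> \<in> space M. \<not> dyadic_increments_le (bridge_deviation X a b \<omega>) (a / 128) 0} \<union>
      {\<omega> \<in> space M. a / 16 < \<bar>bridge_deviation X a b \<omega> (1/2)\<bar>}
     else {})"
    by (auto simp: not_less) (meson not_le)
qed

lemma bes3_bridge_dip_after_hit_level:
  fixes M :: "'a measure" and X :: "real \<Rightarrow> 'a \<Rightarrow> real"
  assumes br: "bes3_bridge M X a b" and a: "0 < a" and b: "0 < b"
    and K: "0 < K" and \<epsilon>: "0 < \<epsilon>" "\<epsilon> \<le> 1/32" and k0: "2 * \<epsilon> * 2 ^ k0 \<le> 1"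
    and G: "16 \<le> G" "G \<le> (K / 40)\<^sup>2 * 2 ^ k0 / 2"
    and G_large_drift: "K / (5 * \<epsilon>) < a - b \<Longrightarrow> G \<le> a\<^sup>2 / 32768"
  shows "measure M {\<omega> \<in> space M. hit_time X (2 * K) \<omega> \<le> 1/2 \<and>
            (INF r\<in>{0..\<epsilon>}. X (real_of_ereal (hit_time X (2 * K) \<omega>) + r) \<omega>) \<le> 3 * K / 2}
      \<le> (4 * 2 ^ k0 + 6) / (1 - exp (- 2 * a * b)) * exp (- G)"
proof -
  interpret prob_space M using br by (simp add: bes3_bridge_def)
  define Kf where "Kf = 1 / (1 - exp (- 2 * a * b))"
  have Kf: "0 \<le> Kf" unfolding Kf_def using a b by simp
  define E where "E = {\<omega> \<in> space M. hit_time X (2 * K) \<omega> \<le> 1/2 \<and>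
      (INF r\<in>{0..\<epsilon>}. X (real_of_ereal (hit_time X (2 * K) \<omega>) + r) \<omega>) \<le> 3 * K / 2}"
  define B1 where "B1 = {\<omega> \<in> space M. \<not> dyadic_increments_le (bridge_deviation X a b \<omega>) (K / 40) k0}"
  define B2 where "B2 = {\<omega> \<in> space M. \<not> dyadic_increments_le (bridge_deviation X a b \<omega>) (a / 128) 0}"
  define B3 where "B3 = {\<omega> \<in> space M. a / 16 < \<bar>bridge_deviation X a b \<omega> (1/2)\<bar>}"
  have B1: "B1 \<in> sets M" "measure M B1 \<le> 4 * Kf * 2 ^ k0 * exp (- G)"
    using bes3_bridge_not_dyadic_increments_le[OF br a b _ G] K by (auto simp: B1_def Kf_def)
  have E: "E \<subseteq> B1 \<union> (if K / (5 * \<epsilon>) < a - b then B2 \<union> B3 else {})"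
    unfolding E_def B1_def B2_def B3_def by (rule dip_after_hit_subset[OF br K \<epsilon> k0 a b])
  show ?thesis
  proof (cases "K / (5 * \<epsilon>) < a - b")
    case False
    then have "measure M E \<le> measure M B1" using E B1(1) by (intro finite_measure_mono) auto
    also have "\<dots> \<le> 4 * Kf * 2 ^ k0 * exp (- G) + 6 * Kf * exp (- G)"
      using B1(2) Kf by (intro add_increasing2) auto
    also have "\<dots> = (4 * 2 ^ k0 + 6) * Kf * exp (- G)"
      by (simp add: algebra_simps)
    finally show ?thesis by (simp add: E_def Kf_def)
  next
    case True
    have G2: "G \<le> (a / 128)\<^sup>2 * 2 ^ 0 / 2"
      using G_large_drift[OF True] by (simp add: power_divide)
    have B2: "B2 \<in> sets M" "measure M B2 \<le> 4 * Kf * 2 ^ 0 * exp (- G)"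
      using bes3_bridge_not_dyadic_increments_le[OF br a b _ G(1) G2] a by (auto simp: B2_def Kf_def)
    have "a\<^sup>2 / 32768 \<le> a\<^sup>2 / 128" by (intro divide_left_mono) auto
    then have "G \<le> a\<^sup>2 / 128" using G_large_drift[OF True] by linarith
    then have "exp (- a\<^sup>2 / 128) \<le> exp (- G)" by simp
    then have "2 * Kf * exp (- a\<^sup>2 / 128) \<le> 2 * Kf * exp (- G)" using Kf by (intro mult_left_mono) auto
    moreover have "B3 \<in> sets M" "measure M B3 \<le> 2 * Kf * exp (- a\<^sup>2 / 128)"
      using bes3_bridge_midpoint_deviation[OF br a b] by (simp_all add: B3_def Kf_def)
    ultimately have B3: "B3 \<in> sets M" "measure M B3 \<le> 2 * Kf * exp (- G)" by auto
    have "measure M E \<le> measure M (B1 \<union> (B2 \<union> B3))"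
      using E B1(1) B2(1) B3(1) True by (intro finite_measure_mono) auto
    also have "\<dots> \<le> measure M B1 + measure M (B2 \<union> B3)"
      using B1(1) B2(1) B3(1) by (intro measure_Un_le) auto
    also have "\<dots> \<le> measure M B1 + (measure M B2 + measure M B3)"
      using B2(1) B3(1) by (intro add_left_mono measure_Un_le)
    also have "\<dots> \<le> (4 * 2 ^ k0 + 6) * Kf * exp (- G)"
      using B1(2) B2(2) B3(2) by (simp add: algebra_simps)
    finally show ?thesis by (simp add: E_def Kf_def)
  qed
qed

lemma exists_dyadic_scale:
  fixes \<epsilon> :: real
  assumes \<epsilon>: "0 < \<epsilon>" "\<epsilon> \<le> 1/2"
  obtains k :: nat where "2 * \<epsilon> * 2 ^ k \<le> 1" "1 / (4 * \<epsilon>) < 2 ^ k"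
proof -
  define N where "N = nat \<lfloor>1 / (2 * \<epsilon>)\<rfloor>"
  have "1 \<le> N" unfolding N_def using \<epsilon> by (simp add: le_nat_floor field_simps)
  then obtain k where k: "2 ^ k \<le> N" "N < 2 ^ (k + 1)" using ex_power_ivl1[of 2 N] by auto
  have N: "real N \<le> 1 / (2 * \<epsilon>)" "1 / (2 * \<epsilon>) < real N + 1" unfolding N_def using \<epsilon> by auto
  have "real (2 ^ k) \<le> real N" "real (N + 1) \<le> real (2 ^ (k + 1))"
    using k by (simp_all only: of_nat_le_iff Suc_eq_plus1[symmetric] Suc_le_eq)
  then have k_real: "(2::real) ^ k \<le> real N" "real N + 1 \<le> 2 * 2 ^ k" by simp_all
  have "2 * \<epsilon> * 2 ^ k \<le> 2 * \<epsilon> * real N" using \<epsilon> k_real by (intro mult_left_mono) auto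
  also have "\<dots> \<le> 1" using N(1) \<epsilon> by (simp add: field_simps)
  finally have "2 * \<epsilon> * 2 ^ k \<le> 1" .
  moreover have "1 / (4 * \<epsilon>) = 1 / (2 * \<epsilon>) / 2" by simp
  then have "1 / (4 * \<epsilon>) < 2 ^ k" using N(2) k_real by linarith
  ultimately show ?thesis by (rule that)
qed

text \<open>The dyadic level k0 is the scale of the window \<epsilon>; the exponent K^2 / \<epsilon> is that of a
  Brownian fluctuation of size K over time \<epsilon>.\<close>
lemma bes3_bridge_dip_after_hit:
  fixes M :: "'a measure" and X :: "real \<Rightarrow> 'a \<Rightarrow> real"
  assumes br: "bes3_bridge M X a b" and a: "0 < a" and b: "0 < b"
    and K: "0 < K" and \<epsilon>: "0 < \<epsilon>" "\<epsilon> \<le> 1/32" and large: "16 \<le> K\<^sup>2 / (819200 * \<epsilon>)"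
  shows "measure M {\<omega> \<in> space M. hit_time X (2 * K) \<omega> \<le> 1/2 \<and>
            (INF r\<in>{0..\<epsilon>}. X (real_of_ereal (hit_time X (2 * K) \<omega>) + r) \<omega>) \<le> 3 * K / 2}
      \<le> 8 / (\<epsilon> * (1 - exp (- 2 * a * b))) * exp (- K\<^sup>2 / (819200 * \<epsilon>))"
proof -
  obtain k0 where k0: "2 * \<epsilon> * 2 ^ k0 \<le> 1" "1 / (4 * \<epsilon>) < 2 ^ k0"
    using \<epsilon> by (auto intro: exists_dyadic_scale[of \<epsilon>])
  define G where "G = K\<^sup>2 / (819200 * \<epsilon>)"
  have "G \<le> K\<^sup>2 / (12800 * \<epsilon>)" unfolding G_def using \<epsilon> by (intro divide_left_mono) auto
  also have "\<dots> = (K / 40)\<^sup>2 * (1 / (4 * \<epsilon>)) / 2" by (simp add: power_divide)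
  also have "\<dots> \<le> (K / 40)\<^sup>2 * 2 ^ k0 / 2" using k0 by (intro divide_right_mono mult_left_mono) auto
  finally have G1: "G \<le> (K / 40)\<^sup>2 * 2 ^ k0 / 2" .
  have G2: "G \<le> a\<^sup>2 / 32768" if large_drift: "K / (5 * \<epsilon>) < a - b"
  proof -
    have "K\<^sup>2 / (25 * \<epsilon>) \<le> K\<^sup>2 / (25 * \<epsilon>\<^sup>2)"
      using \<epsilon> by (intro divide_left_mono mult_left_mono) (auto simp: power2_eq_square mult_le_cancel_left1)
    also have "\<dots> = (K / (5 * \<epsilon>))\<^sup>2" by (simp add: power_divide power_mult_distrib)
    also have "\<dots> \<le> a\<^sup>2" using large_drift b K \<epsilon> by (intro power_mono) auto
    finally show ?thesis unfolding G_def by (simp add: divide_right_mono)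
  qed
  have "(4 * 2 ^ k0 + 6 :: real) \<le> 8 / \<epsilon>"
  proof -
    have "(2::real) ^ k0 \<le> 1 / (2 * \<epsilon>)" using k0 \<epsilon> by (simp add: field_simps)
    then show ?thesis using \<epsilon> by (simp add: field_simps)
  qed
  then have "(4 * 2 ^ k0 + 6) / (1 - exp (- 2 * a * b)) * exp (- G)
      \<le> 8 / \<epsilon> / (1 - exp (- 2 * a * b)) * exp (- G)"
    using a b by (intro mult_right_mono divide_right_mono) auto
  with bes3_bridge_dip_after_hit_level[OF br a b K \<epsilon> k0(1) _ G1 G2] large show ?thesis
    by (simp add: G_def)
qed

section \<open>Scaling\<close>

lemma one_div_one_minus_exp_le:
  fixes x :: real
  assumes "0 < x"
  shows "1 / (1 - exp (- x)) \<le> 1 + 1 / x"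
proof -
  have e: "0 < 1 - exp (- x)" using assms by simp
  have "(1 + x) * exp (- x) \<le> 1"
    using exp_ge_add_one_self[of x] by (simp add: exp_minus field_simps)
  then have "x / (1 - exp (- x)) \<le> x + 1" using e by (simp add: divide_le_eq algebra_simps)
  then show ?thesis using assms e by (simp add: field_simps)
qed

lemma scaled_dip_bound_le:
  fixes u y z Q :: real
  assumes u: "0 < u" "u \<le> 1" and y: "0 < y" and z: "0 < z" and Q: "0 < Q" "4 * Q \<le> u ^ 10"
  shows "8 / (u ^ 4 * (1 - exp (- (2 * (u ^ 3 * z) * (u ^ 3 * y))))) * (Q * Q) \<le> (1 / (y * z) + 2) * Q"
proof -
  have "1 / (1 - exp (- (2 * (u ^ 3 * z) * (u ^ 3 * y)))) \<le> 1 + 1 / (2 * (u ^ 3 * z) * (u ^ 3 * y))"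
    using u y z by (intro one_div_one_minus_exp_le) simp
  then have "8 / u ^ 4 * (1 / (1 - exp (- (2 * (u ^ 3 * z) * (u ^ 3 * y))))) * (Q * Q)
      \<le> 8 / u ^ 4 * (1 + 1 / (2 * (u ^ 3 * z) * (u ^ 3 * y))) * (Q * Q)"
    using u Q by (intro mult_right_mono mult_left_mono) auto
  then have "8 / (u ^ 4 * (1 - exp (- (2 * (u ^ 3 * z) * (u ^ 3 * y))))) * (Q * Q)
      \<le> 8 / u ^ 4 * (1 + 1 / (2 * (u ^ 3 * z) * (u ^ 3 * y))) * (Q * Q)"
    by simp
  also have "\<dots> = (8 * Q / u ^ 4) * Q + (4 * Q / u ^ 10) * Q / (y * z)"
    using u y z by (simp add: field_simps power_numeral_reduce)
  also have "\<dots> \<le> 2 * Q + 1 * Q / (y * z)"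
  proof (intro add_mono mult_right_mono divide_right_mono)
    have "u ^ 10 \<le> u ^ 4" using u by (intro power_decreasing) auto
    then show "8 * Q / u ^ 4 \<le> 2" using Q u by (simp add: field_simps)
    show "4 * Q / u ^ 10 \<le> 1" using Q u by (simp add: field_simps)
  qed (use Q y z in auto)
  also have "\<dots> = (1 / (y * z) + 2) * Q" by (simp add: field_simps)
  finally show ?thesis .
qed

text \<open>In the units u = \<epsilon>^(1/4) of the statement: level K = C u, window \<epsilon> = u^4, endpoints
  u^3 z and u^3 y, so that K^2 / \<epsilon> = C^2 / sqrt \<epsilon>.\<close>
lemma bes3_bridge_dip_after_hit_scaled:
  fixes C \<epsilon> y z :: real and M :: "'a measure" and X :: "real \<Rightarrow> 'a \<Rightarrow> real"
  defines "g \<equiv> C\<^sup>2 / 819200"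
  assumes C: "0 < C" and \<epsilon>: "0 < \<epsilon>" "\<epsilon> \<le> 1/32"
    and small: "16 * sqrt \<epsilon> \<le> g" "4 / (\<epsilon>^2 * sqrt \<epsilon>) \<le> exp (g / (2 * sqrt \<epsilon>))"
    and y: "0 < y" and z: "0 < z"
    and br: "bes3_bridge M X (\<epsilon> powr (3/4) * z) (\<epsilon> powr (3/4) * y)"
  shows "measure M {\<omega> \<in> space M.
                hit_time X (2 * C * \<epsilon> powr (1/4)) \<omega> \<le> 1/2 \<and>
                (INF r\<in>{0..\<epsilon>}. X (real_of_ereal (hit_time X (2 * C * \<epsilon> powr (1/4)) \<omega>) + r) \<omega>)
                  \<le> 3 * C * \<epsilon> powr (1/4) / 2}
         \<le> (1 / (y * z) + 2) * exp (- (g / 2) / sqrt \<epsilon>)"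
proof -
  define u where "u = \<epsilon> powr (1/4)"
  have u: "0 < u" using \<epsilon> by (simp add: u_def)
  have u4: "\<epsilon> = u ^ 4" and u3: "\<epsilon> powr (3/4) = u ^ 3" and u2: "sqrt \<epsilon> = u ^ 2"
    unfolding u_def using \<epsilon>
    by (simp_all add: powr_realpow[symmetric] powr_powr powr_half_sqrt[symmetric])
  have "u ^ 4 \<le> 1" using u4 \<epsilon> by simp
  then have u1: "u \<le> 1" using u by (simp add: power_le_one_iff)
  have exponent: "(C * u)\<^sup>2 / (819200 * \<epsilon>) = g / 2 / u ^ 2 + g / 2 / u ^ 2"
    unfolding g_def u4 using u by (simp add: field_simps power2_eq_square power_numeral_reduce)
  have Q: "4 * exp (- (g / 2 / u ^ 2)) \<le> u ^ 10"
  proof -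
    have "\<epsilon> ^ 2 * sqrt \<epsilon> = \<epsilon> ^ 2 * u ^ 2" by (simp only: u2)
    also have "\<dots> = u ^ 10" unfolding u4 by algebra
    finally have "4 / u ^ 10 \<le> exp (g / 2 / u ^ 2)" using small(2) u2 by simp
    then show ?thesis using u by (simp add: exp_minus field_simps)
  qed
  have "16 \<le> (C * u)\<^sup>2 / (819200 * \<epsilon>)"
    using small(1) u unfolding exponent u2 by (simp add: field_simps)
  from bes3_bridge_dip_after_hit[OF br[unfolded u3] _ _ _ \<epsilon> this]
  have "measure M {\<omega> \<in> space M. hit_time X (2 * (C * u)) \<omega> \<le> 1/2 \<and>
      (INF r\<in>{0..\<epsilon>}. X (real_of_ereal (hit_time X (2 * (C * u)) \<omega>) + r) \<omega>) \<le> 3 * (C * u) / 2}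
    \<le> 8 / (u ^ 4 * (1 - exp (- (2 * (u ^ 3 * z) * (u ^ 3 * y))))) *
      (exp (- (g / 2 / u ^ 2)) * exp (- (g / 2 / u ^ 2)))"
    using u y z C by (simp add: exponent u4[symmetric] exp_add[symmetric])
  also have "\<dots> \<le> (1 / (y * z) + 2) * exp (- (g / 2 / u ^ 2))"
    using u u1 y z Q by (intro scaled_dip_bound_le) auto
  finally show ?thesis unfolding u_def u2[unfolded u_def] by (simp add: mult.assoc)
qed

theorem lemma10:
  fixes C :: real
  assumes "C > 2 * pi"
  shows "\<exists>C9 > 0. \<forall>\<^sub>F \<epsilon> in at_right 0. \<forall>y > 0. \<forall>z > 0.
           \<forall>(M :: 'a measure) X.
             bes3_bridge M X (\<epsilon> powr (3/4) * z) (\<epsilon> powr (3/4) * y) \<longrightarrow>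
             measure M {\<omega> \<in> space M.
                hit_time X (2 * C * \<epsilon> powr (1/4)) \<omega> \<le> 1/2 \<and>
                (INF r\<in>{0..\<epsilon>}. X (real_of_ereal (hit_time X (2 * C * \<epsilon> powr (1/4)) \<omega>) + r) \<omega>)
                  \<le> 3 * C * \<epsilon> powr (1/4) / 2}
             \<le> (1 / (y * z) + 2) * exp (- C9 / sqrt \<epsilon>)"
proof -
  have C: "0 < C" using assms pi_gt_zero by linarith
  define g where "g = C\<^sup>2 / 819200"
  have g: "0 < g" using C by (simp add: g_def)
  have "\<forall>\<^sub>F \<epsilon> in at_right 0. 0 < (\<epsilon>::real)" by (simp add: eventually_at_right_less)
  moreover have "\<forall>\<^sub>F \<epsilon> in at_right 0. \<epsilon> \<le> (1/32::real)" by real_asymp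
  moreover have "\<forall>\<^sub>F \<epsilon> in at_right 0. 16 * sqrt \<epsilon> \<le> g" using g by real_asymp
  moreover have "\<forall>\<^sub>F \<epsilon> in at_right 0. 4 / (\<epsilon>^2 * sqrt \<epsilon>) \<le> exp (g / (2 * sqrt \<epsilon>))"
    using g by real_asymp
  ultimately have "\<forall>\<^sub>F \<epsilon> in at_right 0. \<forall>y > 0. \<forall>z > 0. \<forall>(M :: 'a measure) X.
      bes3_bridge M X (\<epsilon> powr (3/4) * z) (\<epsilon> powr (3/4) * y) \<longrightarrow>
      measure M {\<omega> \<in> space M.
        hit_time X (2 * C * \<epsilon> powr (1/4)) \<omega> \<le> 1/2 \<and>
        (INF r\<in>{0..\<epsilon>}. X (real_of_ereal (hit_time X (2 * C * \<epsilon> powr (1/4)) \<omega>) + r) \<omega>)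
          \<le> 3 * C * \<epsilon> powr (1/4) / 2}
      \<le> (1 / (y * z) + 2) * exp (- (g / 2) / sqrt \<epsilon>)"
    by eventually_elim (use bes3_bridge_dip_after_hit_scaled[OF C] in \<open>auto simp: g_def\<close>)
  then show ?thesis using g by (intro exI[of _ "g / 2"]) auto
qed

end
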